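(* Let $G$ be a connected, closed Lie subgroup of $SO_o(1,2)\ltimes\mathbb{R}^3\subset Iso(\mathbb{R}^3_1)$ which acts isometrically and with cohomogeneity one on $\mathbb{R}^3_1$, with Lie algebra $\mathfrak g\subset\mathfrak{so}(1,2)\oplus_\pi\mathbb{R}^3$. If $L(G)$ is conjugate to $A$, then $\mathfrak g$ is conjugate within $\mathfrak{so}(1,2)\oplus_\pi\mathbb{R}^3$ to one of the following Lie algebras: (i) $\mathfrak a\oplus\mathbb{R}=\{(tB_1,se_3):t,s\in\mathbb{R}\}$; (ii) $\{(tB_1,ue_1+ve_2):t,u,v\in\mathbb{R}\}$; (iii) $\{(tB_1,u(e_1+e_2)+ve_3):t,u,v\in\mathbb{R}\}$; (iv) $\{(tB_1,u(e_1-e_2)+ve_3):t,u,v\in\mathbb{R}\}$; (v) $\{(tB_1,s(e_1\pm e_2)+t\beta e_3):t,s\in\mathbb{R}\}$, where $\beta$ is a fixed real number.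
   Context: $\mathbb{R}^3_1$ is $\mathbb{R}^3$ with the scalar product $\langle x,y\rangle=-x_1y_1+x_2y_2+x_3y_3$; $Iso(\mathbb{R}^3_1)=O(1,2)\ltimes\mathbb{R}^3$ with $(A,a)$ acting by $x\mapsto Ax+a$; $SO_o(1,2)$ is the identity component of $O(1,2)$. The Lie algebra of $SO_o(1,2)\ltimes\mathbb{R}^3$ is $\mathfrak{so}(1,2)\oplus_\pi\mathbb{R}^3$, pairs $(X,v)$, where $\pi$ is the natural representation of $\mathfrak{so}(1,2)$ on $\mathbb{R}^3$ (bracket $[(X,v),(Y,w)]=([X,Y],Xw-Yv)$). $L:G\to SO_o(1,2)$, $(A,a)\mapsto A$. $E_{ij}$ are the $3\times 3$ matrix units, $e_i$ the standard basis, $B_1=E_{12}+E_{21}$, $\mathfrak a=\mathbb{R}B_1$ and $A=\{\exp(tB_1):t\in\mathbb{R}\}$ (the standard $SO_o(1,1)$). Cohomogeneity one means some orbit has codimension one. *)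

theory Defs
  imports "HOL-Analysis.Analysis"
begin

text \<open>Vectors of R^3_1 and 3x3 real matrices; coordinates indexed by 1,2,3.
  An element (A,a) of SO_o(1,2) semidirect R^3 acts by x |-> A x + a.\<close>

type_synonym vec3 = "real^3"
type_synonym mat3 = "real^3^3"
type_synonym aff = "mat3 \<times> vec3"

definition Jmat :: mat3 where
  "Jmat = (\<chi> i j. if i = j then (if i = 1 then -1 else 1) else 0)"

definition SOo12 :: "mat3 set" where
  "SOo12 = {A. transpose A ** Jmat ** A = Jmat \<and> det A = 1 \<and> A $ 1 $ 1 > 0}"

definition aff_mult :: "aff \<Rightarrow> aff \<Rightarrow> aff" where
  "aff_mult g h = (fst g ** fst h, fst g *v snd h + snd g)"

definition aff_one :: aff where
  "aff_one = (mat 1, 0)"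

definition aff_inv :: "aff \<Rightarrow> aff" where
  "aff_inv g = (matrix_inv (fst g), - (matrix_inv (fst g) *v snd g))"

definition aff_act :: "aff \<Rightarrow> vec3 \<Rightarrow> vec3" where
  "aff_act g x = fst g *v x + snd g"

definition SOo12R3 :: "aff set" where
  "SOo12R3 = SOo12 \<times> UNIV"

definition is_subgroup :: "aff set \<Rightarrow> bool" where
  "is_subgroup G \<longleftrightarrow> G \<subseteq> SOo12R3 \<and> aff_one \<in> G \<and>
     (\<forall>g\<in>G. \<forall>h\<in>G. aff_mult g h \<in> G) \<and> (\<forall>g\<in>G. aff_inv g \<in> G)"

text \<open>Lie algebra of a closed subgroup G: the tangent space at the identity,
  i.e. velocities at 0 of curves in G through the identity.  Elements are pairs (X,v)
  in so(1,2) (+)_pi R^3.\<close>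
definition lie_alg :: "aff set \<Rightarrow> aff set" where
  "lie_alg G = {\<xi>. \<exists>\<gamma>::real \<Rightarrow> aff. (\<forall>t. \<gamma> t \<in> G) \<and> \<gamma> 0 = aff_one \<and>
                       (\<gamma> has_vector_derivative \<xi>) (at 0)}"

text \<open>Tangent space at x of the orbit G.x: the image of the Lie algebra under the
  differential of the orbit map g |-> g.x, i.e. {X x + v | (X,v) in g}.\<close>
definition orbit_tangent :: "aff set \<Rightarrow> vec3 \<Rightarrow> vec3 set" where
  "orbit_tangent G x = {fst \<xi> *v x + snd \<xi> | \<xi>. \<xi> \<in> lie_alg G}"

definition cohomogeneity_one :: "aff set \<Rightarrow> bool" where
  "cohomogeneity_one G \<longleftrightarrow> (\<exists>x. dim (orbit_tangent G x) = 2)"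

definition Lpart :: "aff set \<Rightarrow> mat3 set" where
  "Lpart G = fst ` G"

fun mpow :: "mat3 \<Rightarrow> nat \<Rightarrow> mat3" where
  "mpow M 0 = mat 1"
| "mpow M (Suc n) = M ** mpow M n"

definition mexp :: "mat3 \<Rightarrow> mat3" where
  "mexp M = (\<Sum>n. (1 / fact n) *\<^sub>R mpow M n)"

definition Emat :: "3 \<Rightarrow> 3 \<Rightarrow> mat3" where
  "Emat i j = (\<chi> k l. if k = i \<and> l = j then 1 else 0)"

definition e :: "3 \<Rightarrow> vec3" where
  "e i = axis i 1"

definition B1 :: mat3 where
  "B1 = Emat 1 2 + Emat 2 1"

definition Agrp :: "mat3 set" where
  "Agrp = {mexp (t *\<^sub>R B1) | t. True}"

text \<open>Adjoint action of h = (P,p) on so(1,2) (+)_pi R^3 (derivative of conjugation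
  g |-> h g h^-1): (X,v) |-> (P X P^-1, P v - P X P^-1 p).\<close>
definition Ad :: "aff \<Rightarrow> aff \<Rightarrow> aff" where
  "Ad h \<xi> = (let Y = fst h ** fst \<xi> ** matrix_inv (fst h)
            in (Y, fst h *v snd \<xi> - Y *v snd h))"

definition conj_alg :: "aff set \<Rightarrow> aff set \<Rightarrow> bool" where
  "conj_alg g k \<longleftrightarrow> (\<exists>h\<in>SOo12R3. g = Ad h ` k)"

definition alg_i :: "aff set" where
  "alg_i = {(t *\<^sub>R B1, s *\<^sub>R e 3) | t s. True}"
definition alg_ii :: "aff set" where
  "alg_ii = {(t *\<^sub>R B1, u *\<^sub>R e 1 + v *\<^sub>R e 2) | t u v. True}"
definition alg_iii :: "aff set" where
  "alg_iii = {(t *\<^sub>R B1, u *\<^sub>R (e 1 + e 2) + v *\<^sub>R e 3) | t u v. True}"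
definition alg_iv :: "aff set" where
  "alg_iv = {(t *\<^sub>R B1, u *\<^sub>R (e 1 - e 2) + v *\<^sub>R e 3) | t u v. True}"
definition alg_v_plus :: "real \<Rightarrow> aff set" where
  "alg_v_plus \<beta> = {(t *\<^sub>R B1, s *\<^sub>R (e 1 + e 2) + (t * \<beta>) *\<^sub>R e 3) | t s. True}"
definition alg_v_minus :: "real \<Rightarrow> aff set" where
  "alg_v_minus \<beta> = {(t *\<^sub>R B1, s *\<^sub>R (e 1 - e 2) + (t * \<beta>) *\<^sub>R e 3) | t s. True}"

end

(*
  After conjugation by P the linear part of G is the boost group A, so the Lie algebra of G
  is spanned by a lift (B1, w) of B1 and the subspace V of pure translations it contains;
  V is B1-invariant because the Lie algebra is invariant under Ad of the boosts in G.

  The analytic core is that such a lift exists at all.  Connectedness gives elements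
  (boost t, a) of G with t <> 0 arbitrarily close to the identity.  With the translation
  parts a chosen orthogonal to the translation directions of G, every limit direction
  (tau, v) of (t, a) has tau <> 0, and suitable powers of these elements lie within
  O(s^2) of (boost (s tau), s v).  Choosing such elements for every s gives a curve in G with velocity
  (tau B1, v).

  The B1-invariant subspaces are the sums of the eigenlines R(e1 + e2), R(e1 - e2), R e3.
  Cohomogeneity one excludes V = 0, V = R^3 and, when V is the e3-orthogonal plane, a
  nonzero e3-component of w; finally conjugation by a translation removes the e1, e2
  components of w, which leaves exactly the normal forms (i)-(v).
*)

theory Submission
  imports Defs
begin

lemma three_cases [case_names 1 2 3]:
  fixes i :: 3
  obtains "i = 1" | "i = 2" | "i = 3"
  using exhaust_3[of i] by blast

lemma mat3_eq_iff:
  fixes A B :: mat3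
  shows "A = B \<longleftrightarrow> (A $ 1 $ 1 = B $ 1 $ 1 \<and> A $ 1 $ 2 = B $ 1 $ 2 \<and> A $ 1 $ 3 = B $ 1 $ 3 \<and>
    A $ 2 $ 1 = B $ 2 $ 1 \<and> A $ 2 $ 2 = B $ 2 $ 2 \<and> A $ 2 $ 3 = B $ 2 $ 3 \<and>
    A $ 3 $ 1 = B $ 3 $ 1 \<and> A $ 3 $ 2 = B $ 3 $ 2 \<and> A $ 3 $ 3 = B $ 3 $ 3)"
  by (auto simp: vec_eq_iff forall_3)

lemma vec3_eq_iff:
  fixes x y :: vec3
  shows "x = y \<longleftrightarrow> (x $ 1 = y $ 1 \<and> x $ 2 = y $ 2 \<and> x $ 3 = y $ 3)"
  by (auto simp: vec_eq_iff forall_3)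

lemma matrix_matrix_mult_nth_3:
  fixes A B :: mat3
  shows "(A ** B) $ i $ j = A $ i $ 1 * B $ 1 $ j + A $ i $ 2 * B $ 2 $ j + A $ i $ 3 * B $ 3 $ j"
  by (simp add: matrix_matrix_mult_def sum_3)

lemma matrix_vector_mult_nth_3:
  fixes A :: mat3 and x :: vec3
  shows "(A *v x) $ i = A $ i $ 1 * x $ 1 + A $ i $ 2 * x $ 2 + A $ i $ 3 * x $ 3"
  by (simp add: matrix_vector_mult_def sum_3)

lemma mat_1_nth_3 [simp]:
  "(mat 1 :: mat3) $ 1 $ 1 = 1" "(mat 1 :: mat3) $ 1 $ 2 = 0" "(mat 1 :: mat3) $ 1 $ 3 = 0"
  "(mat 1 :: mat3) $ 2 $ 1 = 0" "(mat 1 :: mat3) $ 2 $ 2 = 1" "(mat 1 :: mat3) $ 2 $ 3 = 0"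
  "(mat 1 :: mat3) $ 3 $ 1 = 0" "(mat 1 :: mat3) $ 3 $ 2 = 0" "(mat 1 :: mat3) $ 3 $ 3 = 1"
  by (simp_all add: mat_def)

lemma e_nth [simp]:
  "e 1 $ 1 = 1" "e 1 $ 2 = 0" "e 1 $ 3 = 0" "e 2 $ 1 = 0" "e 2 $ 2 = 1" "e 2 $ 3 = 0"
  "e 3 $ 1 = 0" "e 3 $ 2 = 0" "e 3 $ 3 = 1"
  by (simp_all add: e_def axis_def)

lemma B1_nth [simp]:
  "B1 $ 1 $ 1 = 0" "B1 $ 1 $ 2 = 1" "B1 $ 1 $ 3 = 0"
  "B1 $ 2 $ 1 = 1" "B1 $ 2 $ 2 = 0" "B1 $ 2 $ 3 = 0"
  "B1 $ 3 $ 1 = 0" "B1 $ 3 $ 2 = 0" "B1 $ 3 $ 3 = 0"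
  by (simp_all add: B1_def Emat_def)

lemma B1_mult_vec_nth [simp]: "(B1 *v x) $ 1 = x $ 2" "(B1 *v x) $ 2 = x $ 1" "(B1 *v x) $ 3 = 0"
  by (simp_all add: matrix_vector_mult_nth_3)

section \<open>Matrix inverses and conjugation by linear elements\<close>

lemma matrix_inv_eqI:
  fixes A B :: "'a::semiring_1^'n^'n"
  assumes "A ** B = mat 1" "B ** A = mat 1"
  shows "matrix_inv A = B"
proof -
  have "A ** matrix_inv A = mat 1 \<and> matrix_inv A ** A = mat 1"
    unfolding matrix_inv_def by (rule someI[of _ B]) (use assms in simp)
  then have "B = B ** (A ** matrix_inv A)" by simp
  also have "\<dots> = matrix_inv A" by (simp add: matrix_mul_assoc assms)
  finally show ?thesis by simp
qed

lemma
  fixes A :: "'a::semiring_1^'n^'n"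
  assumes "invertible A"
  shows matrix_inv_right: "A ** matrix_inv A = mat 1"
    and matrix_inv_left: "matrix_inv A ** A = mat 1"
proof -
  obtain B where "A ** B = mat 1" "B ** A = mat 1" using assms unfolding invertible_def by blast
  then show "A ** matrix_inv A = mat 1" "matrix_inv A ** A = mat 1"
    using matrix_inv_eqI by auto
qed

lemma invertible_matrix_inv: "invertible A \<Longrightarrow> invertible (matrix_inv A)"
  for A :: "'a::semiring_1^'n^'n"
  using matrix_inv_left matrix_inv_right invertible_def by blast

lemma matrix_inv_matrix_inv:
  fixes A :: "'a::semiring_1^'n^'n"
  assumes "invertible A"
  shows "matrix_inv (matrix_inv A) = A"
  by (rule matrix_inv_eqI) (simp_all add: assms matrix_inv_left matrix_inv_right)

lemma matrix_mul_matrix_inv_cancel [simp]: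
  fixes A X :: "'a::semiring_1^'n^'n"
  assumes "invertible A"
  shows "X ** A ** matrix_inv A = X" "X ** matrix_inv A ** A = X"
  using assms by (simp_all flip: matrix_mul_assoc add: matrix_inv_left matrix_inv_right)

lemma matrix_inv_conj:
  fixes P A :: "'a::semiring_1^'n^'n"
  assumes "invertible P" "invertible A"
  shows "matrix_inv (P ** A ** matrix_inv P) = P ** matrix_inv A ** matrix_inv P"
  by (rule matrix_inv_eqI) (use assms in \<open>simp_all add: matrix_mul_assoc matrix_inv_right\<close>)

lemma invertible_SOo12: "P \<in> SOo12 \<Longrightarrow> invertible P"
  by (simp add: SOo12_def invertible_det_nz)

lemma bounded_bilinear_matrix_matrix_mult:
  "bounded_bilinear ((**) :: real^'n^'m \<Rightarrow> real^'k^'n \<Rightarrow> real^'k^'m)"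
  unfolding bilinear_conv_bounded_bilinear[symmetric] bilinear_def linear_iff
  by (simp add: vec_eq_iff matrix_matrix_mult_def distrib_left distrib_right sum.distrib
      sum_distrib_left mult_ac)

lemma bounded_bilinear_matrix_vector_mult: "bounded_bilinear ((*v) :: real^'n^'m \<Rightarrow> real^'n \<Rightarrow> real^'m)"
  unfolding bilinear_conv_bounded_bilinear[symmetric] bilinear_def linear_iff
  by (simp add: vec_eq_iff matrix_vector_mult_def distrib_left distrib_right sum.distrib
      sum_distrib_left mult_ac)

text \<open>For a purely linear element \<open>(P, 0)\<close> the conjugation \<open>g \<mapsto> (P,0) g (P,0)\<inverse>\<close> of the
  group is itself the linear map \<open>Ad (P, 0)\<close>; it serves both on the group and on its Lie algebra.\<close>

lemma Ad_linear_elem: "Ad (P, 0) \<xi> = (P ** fst \<xi> ** matrix_inv P, P *v snd \<xi>)"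
  by (simp add: Ad_def Let_def)

lemma bounded_linear_Ad_linear_elem: "bounded_linear (Ad (P, 0))"
proof -
  have "bounded_linear (\<lambda>X :: mat3. P ** X ** matrix_inv P)"
    using bounded_linear_compose[OF
        bounded_bilinear.bounded_linear_left[OF bounded_bilinear_matrix_matrix_mult]
        bounded_bilinear.bounded_linear_right[OF bounded_bilinear_matrix_matrix_mult]] .
  moreover have "bounded_linear (\<lambda>x :: vec3. P *v x)"
    by (rule bounded_bilinear.bounded_linear_right[OF bounded_bilinear_matrix_vector_mult])
  ultimately show ?thesis
    unfolding Ad_linear_elem[abs_def]
    by (intro bounded_linear_Pair bounded_linear_compose[OF _ bounded_linear_fst]
        bounded_linear_compose[OF _ bounded_linear_snd])
qed

lemma Ad_linear_elem_inverse:
  assumes "invertible P"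
  shows "Ad (matrix_inv P, 0) (Ad (P, 0) \<xi>) = \<xi>"
proof -
  have "matrix_inv P ** (P ** fst \<xi> ** matrix_inv P) ** matrix_inv (matrix_inv P)
      = (matrix_inv P ** P) ** fst \<xi> ** (matrix_inv P ** P)"
    using assms by (simp add: matrix_inv_matrix_inv matrix_mul_assoc)
  then show ?thesis
    using assms by (simp add: Ad_linear_elem matrix_inv_left matrix_vector_mul_assoc)
qed

lemma Ad_linear_elem_aff_one: "invertible P \<Longrightarrow> Ad (P, 0) aff_one = aff_one"
  by (simp add: Ad_linear_elem aff_one_def matrix_inv_right)

lemma Ad_linear_elem_aff_mult:
  assumes "invertible P"
  shows "Ad (P, 0) (aff_mult g h) = aff_mult (Ad (P, 0) g) (Ad (P, 0) h)"
proof -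
  have "P ** fst g ** matrix_inv P ** (P ** fst h ** matrix_inv P)
      = P ** fst g ** (matrix_inv P ** P) ** fst h ** matrix_inv P"
    by (simp add: matrix_mul_assoc)
  moreover have "(P ** fst g ** matrix_inv P) *v (P *v snd h)
      = (P ** fst g ** (matrix_inv P ** P)) *v snd h"
    by (simp add: matrix_vector_mul_assoc matrix_mul_assoc)
  ultimately show ?thesis
    using assms by (simp add: Ad_linear_elem aff_mult_def matrix_inv_left matrix_mul_assoc
        matrix_vector_mul_assoc matrix_vector_right_distrib)
qed

lemma Ad_linear_elem_aff_inv:
  assumes "invertible P" "invertible (fst g)"
  shows "Ad (P, 0) (aff_inv g) = aff_inv (Ad (P, 0) g)"
proof -
  have "(P ** matrix_inv (fst g) ** matrix_inv P) *v (P *v snd g)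
      = P *v (matrix_inv (fst g) *v snd g)"
    using assms by (simp add: matrix_vector_mul_assoc matrix_mul_assoc matrix_inv_left)
  then show ?thesis
    using assms by (simp add: Ad_linear_elem aff_inv_def matrix_inv_conj matrix_mul_assoc
        linear_neg[OF matrix_vector_mul_linear])
qed

section \<open>Boosts\<close>

definition boost :: "real \<Rightarrow> mat3" where
  "boost t = (\<chi> i j. if i = 3 \<or> j = 3 then (if i = j then 1 else 0)
                     else if i = j then cosh t else sinh t)"

lemma boost_nth [simp]:
  "boost t $ 1 $ 1 = cosh t" "boost t $ 1 $ 2 = sinh t" "boost t $ 1 $ 3 = 0"
  "boost t $ 2 $ 1 = sinh t" "boost t $ 2 $ 2 = cosh t" "boost t $ 2 $ 3 = 0"
  "boost t $ 3 $ 1 = 0" "boost t $ 3 $ 2 = 0" "boost t $ 3 $ 3 = 1"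
  by (simp_all add: boost_def)

lemma boost_add: "boost (s + t) = boost s ** boost t"
  by (simp add: mat3_eq_iff matrix_matrix_mult_nth_3 cosh_add sinh_add algebra_simps)

lemma boost_0 [simp]: "boost 0 = mat 1"
  by (simp add: mat3_eq_iff)

lemma boost_eq_1_iff: "boost s = mat 1 \<longleftrightarrow> s = 0"
  by (auto simp: mat3_eq_iff)

lemma boost_mult_boost_uminus: "boost s ** boost (- s) = mat 1" "boost (- s) ** boost s = mat 1"
  using boost_add[of s "- s"] boost_add[of "- s" s] by simp_all

lemma invertible_boost: "invertible (boost s)"
  using boost_mult_boost_uminus invertible_def by blast

lemma matrix_inv_boost: "matrix_inv (boost s) = boost (- s)"
  by (intro matrix_inv_eqI boost_mult_boost_uminus)

lemma boost_eq: "boost s = mat 1 + (cosh s - 1) *\<^sub>R (B1 ** B1) + sinh s *\<^sub>R B1"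
  by (simp add: mat3_eq_iff matrix_matrix_mult_nth_3)

lemma tendsto_boost [tendsto_intros]: "(f \<longlongrightarrow> l) F \<Longrightarrow> ((\<lambda>x. boost (f x)) \<longlongrightarrow> boost l) F"
  unfolding boost_eq by (intro tendsto_intros)

lemma boost_has_vector_derivative: "((\<lambda>s. boost (s * \<tau>)) has_vector_derivative \<tau> *\<^sub>R B1) (at 0)"
  unfolding boost_eq
  by (rule has_vector_derivative_eq_rhs, (rule derivative_intros)+) (auto intro!: derivative_eq_intros)

lemma mpow_scaleR_B1_nth:
  "mpow (t *\<^sub>R B1) n $ i $ j =
     (if i = 3 \<or> j = 3 then (if i = j \<and> n = 0 then 1 else 0)
      else if (i = j) = even n then t ^ n else 0)"
proof (induction n arbitrary: i j)
  case 0
  then show ?case by (cases i rule: three_cases; cases j rule: three_cases) (simp_all add: mat_def)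
next
  case (Suc n)
  then show ?case
    by (cases i rule: three_cases; cases j rule: three_cases) (simp_all add: matrix_matrix_mult_nth_3)
qed

lemma vec_sumsI:
  assumes "\<And>i. (\<lambda>n. f n $ i) sums (L $ i)"
  shows "f sums L"
  using assms unfolding sums_def by (intro vec_tendstoI) (simp add: sum_component)

lemma mexp_scaleR_B1: "mexp (t *\<^sub>R B1) = boost t"
proof -
  have "(\<lambda>n. (1 / fact n) *\<^sub>R mpow (t *\<^sub>R B1) n) sums boost t"
  proof (intro vec_sumsI)
    fix i j :: 3
    have series: "(\<lambda>n. (if P n then t ^ n else 0) / fact n) = (\<lambda>n. if P n then t ^ n /\<^sub>R fact n else 0)"
      for P :: "nat \<Rightarrow> bool"
      by (auto simp: fun_eq_iff divide_inverse mult.commute)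
    have cosh: "(\<lambda>n. (if even n then t ^ n else 0) / fact n) sums cosh t"
      unfolding series by (rule cosh_converges)
    have sinh: "(\<lambda>n. (if odd n then t ^ n else 0) / fact n) sums sinh t"
    proof -
      have "(\<lambda>n. if odd n then t ^ n /\<^sub>R fact n else 0) = (\<lambda>n. if even n then 0 else t ^ n /\<^sub>R fact n)"
        by auto
      then show ?thesis unfolding series using sinh_converges[of t] by simp
    qed
    have one: "(\<lambda>n. (if n = 0 then 1 else 0) / fact n) sums (1::real)"
    proof -
      have "(\<lambda>n. (if n = 0 then 1 else 0) / fact n) = (\<lambda>n. if n = 0 then 1 else 0 :: real)"
        by auto
      then show ?thesis using sums_single[of 0 "\<lambda>_. 1::real"] by simp
    qed
    show "(\<lambda>n. ((1 / fact n) *\<^sub>R mpow (t *\<^sub>R B1) n) $ i $ j) sums boost t $ i $ j"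
      unfolding vector_scaleR_component mpow_scaleR_B1_nth real_scaleR_def
      by (cases i rule: three_cases; cases j rule: three_cases) (simp_all add: cosh sinh one)
  qed
  then show ?thesis unfolding mexp_def by (simp add: sums_iff)
qed

lemma Agrp_eq_range_boost: "Agrp = range boost"
  by (auto simp: Agrp_def mexp_scaleR_B1)

lemma abs_le_norm_boost_minus_1: "\<bar>s\<bar> \<le> norm (boost s - mat 1)"
proof -
  have "\<bar>s\<bar> \<le> \<bar>sinh s\<bar>"
    using real_le_abs_sinh[of s] by (simp add: sinh_field_def exp_minus)
  also have "\<dots> = norm ((boost s - mat 1) $ 1 $ 2)" by simp
  also have "\<dots> \<le> norm (boost s - mat 1)"
    by (rule order.trans[OF Finite_Cartesian_Product.norm_nth_le Finite_Cartesian_Product.norm_nth_le])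
  finally show ?thesis .
qed

lemma cosh_sinh_small_bound:
  fixes s :: real
  assumes "\<bar>s\<bar> \<le> 1/2"
  shows "\<bar>cosh s - 1\<bar> + \<bar>sinh s\<bar> \<le> 3 * \<bar>s\<bar>"
proof -
  have "exp \<bar>s\<bar> \<le> 1 + 2 * \<bar>s\<bar>" using real_exp_bound_lemma[of "\<bar>s\<bar>"] assms by simp
  moreover have "\<bar>cosh s - 1\<bar> + \<bar>sinh s\<bar> = cosh \<bar>s\<bar> - 1 + sinh \<bar>s\<bar>"
    using cosh_real_ge_1[of s] by (simp add: abs_if)
  ultimately show ?thesis using cosh_plus_sinh[of "\<bar>s\<bar>"] by linarith
qed

lemma norm_vec3_le:
  fixes x y :: vec3
  assumes "x $ 1 ^ 2 + x $ 2 ^ 2 + x $ 3 ^ 2 \<le> y $ 1 ^ 2 + y $ 2 ^ 2 + y $ 3 ^ 2"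
  shows "norm x \<le> norm y"
  using assms by (simp add: norm_le inner_vec_def sum_3 power2_eq_square)

lemma norm_boost_mult_minus_le: "norm (boost s *v p - p) \<le> (\<bar>cosh s - 1\<bar> + \<bar>sinh s\<bar>) * norm p"
proof -
  have "boost s *v p - p = (cosh s - 1) *\<^sub>R ((B1 ** B1) *v p) + sinh s *\<^sub>R (B1 *v p)"
    by (simp add: boost_eq algebra_simps flip: scaleR_matrix_vector_assoc)
  then have "norm (boost s *v p - p) \<le> \<bar>cosh s - 1\<bar> * norm ((B1 ** B1) *v p) + \<bar>sinh s\<bar> * norm (B1 *v p)"
    by (metis norm_scaleR norm_triangle_ineq real_norm_def)
  also have "\<dots> \<le> \<bar>cosh s - 1\<bar> * norm p + \<bar>sinh s\<bar> * norm p"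
  proof -
    have "norm (B1 *v p) \<le> norm p" by (rule norm_vec3_le) simp
    moreover have "norm ((B1 ** B1) *v p) \<le> norm p"
      by (rule norm_vec3_le) (simp add: matrix_vector_mul_assoc[symmetric])
    ultimately show ?thesis by (intro add_mono mult_left_mono) auto
  qed
  finally show ?thesis by (simp only: distrib_right)
qed

lemma norm_boost_mult_minus_le_small:
  "\<bar>s\<bar> \<le> 1/2 \<Longrightarrow> norm (boost s *v p - p) \<le> 3 * \<bar>s\<bar> * norm p"
  by (rule order_trans[OF norm_boost_mult_minus_le])
    (intro mult_right_mono cosh_sinh_small_bound, auto)

lemma boost_curve_derivative:
  assumes curve: "\<And>t. \<gamma> t \<in> range boost" and "\<gamma> 0 = mat 1"
    and deriv: "(\<gamma> has_vector_derivative X) (at 0)"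
  shows "X = X $ 1 $ 2 *\<^sub>R B1"
proof -
  have "\<forall>t. \<exists>s. \<gamma> t = boost s" using curve by blast
  then obtain \<tau> where \<tau>: "\<And>t. \<gamma> t = boost (\<tau> t)" by metis
  have "boost (\<tau> 0) = mat 1" using \<tau>[of 0] \<open>\<gamma> 0 = mat 1\<close> by simp
  then have "\<tau> 0 = 0" by (simp add: boost_eq_1_iff)
  have entry: "((\<lambda>t. \<gamma> t $ i $ j) has_real_derivative X $ i $ j) (at 0)" for i j
  proof -
    have "bounded_linear (\<lambda>M :: mat3. M $ i $ j)"
      using bounded_linear_compose[OF bounded_linear_vec_nth bounded_linear_vec_nth] .
    from bounded_linear.has_vector_derivative[OF this deriv] show ?thesis
      by (simp add: has_real_derivative_iff_has_vector_derivative)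
  qed
  have const: "X $ i $ j = 0" if "\<And>t. \<gamma> t $ i $ j = c" for i j c
    using entry[of i j] DERIV_const DERIV_unique unfolding that by blast
  txt \<open>The diagonal entries \<open>cosh (\<tau> t)\<close> are minimal at \<open>t = 0\<close>.\<close>
  have diag: "X $ i $ i = 0" if "\<And>t. \<gamma> t $ i $ i = cosh (\<tau> t)" for i
  proof (rule DERIV_local_min[OF entry[of i i], of 1])
    show "\<forall>y. \<bar>0 - y\<bar> < 1 \<longrightarrow> \<gamma> 0 $ i $ i \<le> \<gamma> y $ i $ i"
      using that cosh_real_ge_1 \<open>\<tau> 0 = 0\<close> by simp
  qed simp
  have "X $ 2 $ 1 = X $ 1 $ 2"
    using entry[of 2 1] entry[of 1 2] by (simp add: \<tau> DERIV_unique)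
  then show ?thesis
    using diag[of 1] diag[of 2] const[of 1 3 0] const[of 2 3 0] const[of 3 1 0] const[of 3 2 0] const[of 3 3 1]
    by (simp add: \<tau> mat3_eq_iff)
qed

section \<open>Lie algebras of subsets of the affine group\<close>

lemma has_vector_derivative_aff_mult:
  assumes "(\<gamma>1 has_vector_derivative \<xi>1) (at x)" "(\<gamma>2 has_vector_derivative \<xi>2) (at x)"
  shows "((\<lambda>t. aff_mult (\<gamma>1 t) (\<gamma>2 t)) has_vector_derivative
     (fst (\<gamma>1 x) ** fst \<xi>2 + fst \<xi>1 ** fst (\<gamma>2 x),
      fst (\<gamma>1 x) *v snd \<xi>2 + fst \<xi>1 *v snd (\<gamma>2 x) + snd \<xi>1)) (at x)"
proof -
  note fst1 = bounded_linear.has_vector_derivative[OF bounded_linear_fst assms(1)]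
    and fst2 = bounded_linear.has_vector_derivative[OF bounded_linear_fst assms(2)]
    and snd1 = bounded_linear.has_vector_derivative[OF bounded_linear_snd assms(1)]
    and snd2 = bounded_linear.has_vector_derivative[OF bounded_linear_snd assms(2)]
  show ?thesis
    unfolding aff_mult_def
    by (intro has_vector_derivative_Pair has_vector_derivative_add snd1
        bounded_bilinear.has_vector_derivative[OF bounded_bilinear_matrix_matrix_mult fst1 fst2]
        bounded_bilinear.has_vector_derivative[OF bounded_bilinear_matrix_vector_mult fst1 snd2])
qed

lemma has_vector_derivative_aff_mult_left:
  assumes "(\<gamma> has_vector_derivative \<xi>) (at x)"
  shows "((\<lambda>t. aff_mult g (\<gamma> t)) has_vector_derivative (fst g ** fst \<xi>, fst g *v snd \<xi>)) (at x)"
  using has_vector_derivative_aff_mult[OF has_vector_derivative_const[of g] assms] by simp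

lemma has_vector_derivative_aff_mult_right:
  assumes "(\<gamma> has_vector_derivative \<xi>) (at x)"
  shows "((\<lambda>t. aff_mult (\<gamma> t) h) has_vector_derivative (fst \<xi> ** fst h, fst \<xi> *v snd h + snd \<xi>)) (at x)"
  using has_vector_derivative_aff_mult[OF assms has_vector_derivative_const[of h]] by simp

lemma lie_alg_zero: "aff_one \<in> H \<Longrightarrow> 0 \<in> lie_alg H"
  unfolding lie_alg_def by (auto intro!: exI[of _ "\<lambda>t. aff_one"])

lemma lie_alg_scaleR:
  assumes "\<xi> \<in> lie_alg H"
  shows "c *\<^sub>R \<xi> \<in> lie_alg H"
proof -
  obtain \<gamma> where \<gamma>: "\<forall>t. \<gamma> t \<in> H" "\<gamma> 0 = aff_one" "(\<gamma> has_vector_derivative \<xi>) (at 0)"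
    using assms unfolding lie_alg_def by blast
  have "((\<lambda>t. c * t) has_real_derivative c) (at 0)"
    by (auto intro!: derivative_eq_intros)
  then have "((\<lambda>t. c * t) has_vector_derivative c) (at 0)"
    by (simp add: has_real_derivative_iff_has_vector_derivative)
  then have "((\<gamma> \<circ> (\<lambda>t. c * t)) has_vector_derivative c *\<^sub>R \<xi>) (at 0)"
    by (rule vector_diff_chain_at) (simp add: \<gamma>(3))
  then show ?thesis
    unfolding lie_alg_def using \<gamma>(1,2) by (intro CollectI exI[of _ "\<gamma> \<circ> (\<lambda>t. c * t)"]) auto
qed

lemma lie_alg_add:
  assumes mult: "\<And>g h. g \<in> H \<Longrightarrow> h \<in> H \<Longrightarrow> aff_mult g h \<in> H"
    and "\<xi>1 \<in> lie_alg H" "\<xi>2 \<in> lie_alg H"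
  shows "\<xi>1 + \<xi>2 \<in> lie_alg H"
proof -
  obtain \<gamma>1 where \<gamma>1: "\<forall>t. \<gamma>1 t \<in> H" "\<gamma>1 0 = aff_one" "(\<gamma>1 has_vector_derivative \<xi>1) (at 0)"
    using assms(2) unfolding lie_alg_def by blast
  obtain \<gamma>2 where \<gamma>2: "\<forall>t. \<gamma>2 t \<in> H" "\<gamma>2 0 = aff_one" "(\<gamma>2 has_vector_derivative \<xi>2) (at 0)"
    using assms(3) unfolding lie_alg_def by blast
  have "((\<lambda>t. aff_mult (\<gamma>1 t) (\<gamma>2 t)) has_vector_derivative
      (fst \<xi>1 + fst \<xi>2, snd \<xi>1 + snd \<xi>2)) (at 0)"
    using has_vector_derivative_aff_mult[OF \<gamma>1(3) \<gamma>2(3)] by (simp add: \<gamma>1(2) \<gamma>2(2) aff_one_def add.commute)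
  then have "((\<lambda>t. aff_mult (\<gamma>1 t) (\<gamma>2 t)) has_vector_derivative \<xi>1 + \<xi>2) (at 0)"
    by (simp add: plus_prod_def)
  moreover have "aff_mult (\<gamma>1 0) (\<gamma>2 0) = aff_one"
    by (simp add: \<gamma>1(2) \<gamma>2(2) aff_one_def aff_mult_def)
  moreover have "aff_mult (\<gamma>1 t) (\<gamma>2 t) \<in> H" for t
    using \<gamma>1(1) \<gamma>2(1) mult by blast
  ultimately show ?thesis
    unfolding lie_alg_def by (intro CollectI exI[of _ "\<lambda>t. aff_mult (\<gamma>1 t) (\<gamma>2 t)"]) blast
qed

lemma lie_alg_diff:
  "(\<And>g h. g \<in> H \<Longrightarrow> h \<in> H \<Longrightarrow> aff_mult g h \<in> H) \<Longrightarrow> \<xi>1 \<in> lie_alg H \<Longrightarrow> \<xi>2 \<in> lie_alg H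
    \<Longrightarrow> \<xi>1 - \<xi>2 \<in> lie_alg H"
  using lie_alg_add[of H \<xi>1 "(-1) *\<^sub>R \<xi>2"] lie_alg_scaleR[of \<xi>2 H "-1"] by simp

lemma lie_alg_Ad:
  assumes mult: "\<And>g h. g \<in> H \<Longrightarrow> h \<in> H \<Longrightarrow> aff_mult g h \<in> H"
    and g: "g \<in> H" "aff_inv g \<in> H" "invertible (fst g)" and \<xi>: "\<xi> \<in> lie_alg H"
  shows "Ad g \<xi> \<in> lie_alg H"
proof -
  obtain \<gamma> where \<gamma>: "\<forall>t. \<gamma> t \<in> H" "\<gamma> 0 = aff_one" "(\<gamma> has_vector_derivative \<xi>) (at 0)"
    using \<xi> unfolding lie_alg_def by blast
  define \<delta> where "\<delta> t = aff_mult (aff_mult g (\<gamma> t)) (aff_inv g)" for t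
  have "(\<delta> has_vector_derivative
      (fst g ** fst \<xi> ** fst (aff_inv g), (fst g ** fst \<xi>) *v snd (aff_inv g) + fst g *v snd \<xi>)) (at 0)"
    unfolding \<delta>_def
    using has_vector_derivative_aff_mult_right[OF has_vector_derivative_aff_mult_left[OF \<gamma>(3)]]
    by simp
  moreover have "(fst g ** fst \<xi> ** fst (aff_inv g), (fst g ** fst \<xi>) *v snd (aff_inv g) + fst g *v snd \<xi>)
      = Ad g \<xi>"
    by (simp add: Ad_def Let_def aff_inv_def linear_neg[OF matrix_vector_mul_linear] matrix_vector_mul_assoc)
  ultimately have "(\<delta> has_vector_derivative Ad g \<xi>) (at 0)" by simp
  moreover have "\<delta> 0 = aff_one"
    using g(3) by (simp add: \<delta>_def \<gamma>(2) aff_one_def aff_inv_def aff_mult_def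
        matrix_inv_right matrix_vector_mul_assoc linear_neg[OF matrix_vector_mul_linear])
  moreover have "\<delta> t \<in> H" for t
    unfolding \<delta>_def using \<gamma>(1) g mult by blast
  ultimately show ?thesis unfolding lie_alg_def by (intro CollectI exI[of _ \<delta>]) blast
qed

lemma linear_image_lie_alg_subset:
  assumes "bounded_linear f" "f aff_one = aff_one"
  shows "f ` lie_alg H \<subseteq> lie_alg (f ` H)"
proof
  fix \<eta> assume "\<eta> \<in> f ` lie_alg H"
  then obtain \<xi> \<gamma> where \<eta>: "\<eta> = f \<xi>" and \<gamma>: "\<forall>t. \<gamma> t \<in> H" "\<gamma> 0 = aff_one"
    "(\<gamma> has_vector_derivative \<xi>) (at 0)"
    unfolding lie_alg_def by blast
  have "((\<lambda>t. f (\<gamma> t)) has_vector_derivative f \<xi>) (at 0)"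
    by (rule bounded_linear.has_vector_derivative[OF assms(1) \<gamma>(3)])
  then show "\<eta> \<in> lie_alg (f ` H)"
    unfolding lie_alg_def \<eta> using \<gamma>(1,2) assms(2) by (intro CollectI exI[of _ "\<lambda>t. f (\<gamma> t)"]) auto
qed

lemma lie_alg_Ad_linear_elem_image:
  assumes "invertible P"
  shows "lie_alg (Ad (P, 0) ` H) = Ad (P, 0) ` lie_alg H"
proof
  show "Ad (P, 0) ` lie_alg H \<subseteq> lie_alg (Ad (P, 0) ` H)"
    using assms by (intro linear_image_lie_alg_subset bounded_linear_Ad_linear_elem Ad_linear_elem_aff_one)
  have inv: "invertible (matrix_inv P)" "matrix_inv (matrix_inv P) = P"
    using assms by (simp_all add: invertible_matrix_inv matrix_inv_matrix_inv)
  have Ad_inv_image: "Ad (matrix_inv P, 0) ` Ad (P, 0) ` S = S" for S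
    by (simp add: image_comp o_def Ad_linear_elem_inverse[OF assms])
  have "Ad (matrix_inv P, 0) ` lie_alg (Ad (P, 0) ` H) \<subseteq> lie_alg H"
    using linear_image_lie_alg_subset[OF bounded_linear_Ad_linear_elem
        Ad_linear_elem_aff_one[OF inv(1)], of "Ad (P, 0) ` H"]
    by (simp add: Ad_inv_image)
  then have "Ad (P, 0) ` Ad (matrix_inv P, 0) ` lie_alg (Ad (P, 0) ` H) \<subseteq> Ad (P, 0) ` lie_alg H"
    by (rule image_mono)
  moreover have "Ad (P, 0) ` Ad (matrix_inv P, 0) ` S = S" for S
    using Ad_linear_elem_inverse[OF inv(1)] by (simp add: image_comp o_def inv(2))
  ultimately show "lie_alg (Ad (P, 0) ` H) \<subseteq> Ad (P, 0) ` lie_alg H" by simp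
qed

lemma orbit_tangent_Ad_linear_elem_image:
  assumes "invertible P"
  shows "orbit_tangent (Ad (P, 0) ` H) x = (\<lambda>y. P *v y) ` orbit_tangent H (matrix_inv P *v x)"
proof -
  have "fst (Ad (P, 0) \<xi>) *v x + snd (Ad (P, 0) \<xi>) = P *v (fst \<xi> *v (matrix_inv P *v x) + snd \<xi>)" for \<xi>
    by (simp add: Ad_linear_elem matrix_vector_mul_assoc matrix_vector_right_distrib matrix_mul_assoc)
  then show ?thesis
    unfolding orbit_tangent_def lie_alg_Ad_linear_elem_image[OF assms] setcompr_eq_image
    by (simp add: image_image)
qed

lemma cohomogeneity_one_Ad_linear_elem_imageD:
  assumes "invertible P" "cohomogeneity_one (Ad (P, 0) ` H)"
  shows "cohomogeneity_one H"
proof -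
  obtain x where x: "dim (orbit_tangent (Ad (P, 0) ` H) x) = 2"
    using assms(2) unfolding cohomogeneity_one_def by blast
  have "inj ((*v) P)"
  proof (rule injI)
    fix y z assume "P *v y = P *v z"
    then have "matrix_inv P *v (P *v y) = matrix_inv P *v (P *v z)" by simp
    then show "y = z" using assms(1) by (simp add: matrix_vector_mul_assoc matrix_inv_left)
  qed
  then have "dim ((\<lambda>y. P *v y) ` orbit_tangent H (matrix_inv P *v x))
      = dim (orbit_tangent H (matrix_inv P *v x))"
    by (intro dim_image_eq) (auto intro: inj_on_subset)
  then show ?thesis
    using x unfolding cohomogeneity_one_def orbit_tangent_Ad_linear_elem_image[OF assms(1)] by metis
qed

lemma has_vector_derivative_quadratically_close:
  fixes \<gamma> f :: "real \<Rightarrow> 'a::real_normed_vector"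
  assumes f: "(f has_vector_derivative d) (at 0)" and "\<delta> > 0"
    and close: "\<And>s. \<bar>s\<bar> \<le> \<delta> \<Longrightarrow> norm (\<gamma> s - f s) \<le> C * s\<^sup>2"
  shows "(\<gamma> has_vector_derivative d) (at 0)"
proof -
  define h where "h s = \<gamma> s - f s" for s
  have h0: "h 0 = 0" using close[of 0] \<open>\<delta> > 0\<close> by (simp add: h_def)
  have "(h has_vector_derivative 0) (at 0)"
    unfolding has_vector_derivative_def has_derivative_at
  proof (intro conjI)
    show "bounded_linear (\<lambda>x. x *\<^sub>R (0::'a))" by (simp add: bounded_linear_zero)
    have "\<forall>\<^sub>F x in at 0. norm (norm (h (0 + x) - h 0 - x *\<^sub>R 0) / norm x) \<le> \<bar>C\<bar> * \<bar>x\<bar>"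
      unfolding eventually_at
    proof (intro exI[of _ \<delta>] conjI ballI impI)
      fix x :: real assume x: "x \<noteq> 0 \<and> dist x 0 < \<delta>"
      have "norm (h x) \<le> C * x\<^sup>2" using close[of x] x by (simp add: h_def)
      also have "\<dots> \<le> \<bar>C\<bar> * x\<^sup>2" by (rule mult_right_mono) auto
      also have "\<dots> = \<bar>C\<bar> * \<bar>x\<bar> * \<bar>x\<bar>" by (simp add: power2_eq_square abs_mult_self_eq)
      finally have "norm (h x) \<le> \<bar>C\<bar> * \<bar>x\<bar> * \<bar>x\<bar>" .
      then show "norm (norm (h (0 + x) - h 0 - x *\<^sub>R 0) / norm x) \<le> \<bar>C\<bar> * \<bar>x\<bar>"
        using x by (simp add: h0 divide_le_eq)
    qed (use \<open>\<delta> > 0\<close> in auto)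
    moreover have "((\<lambda>x::real. \<bar>C\<bar> * \<bar>x\<bar>) \<longlongrightarrow> 0) (at 0)"
      by (auto intro!: tendsto_eq_intros)
    ultimately show "((\<lambda>x. norm (h (0 + x) - h 0 - x *\<^sub>R 0) / norm x) \<longlongrightarrow> 0) (at 0)"
      by (rule Lim_null_comparison)
  qed
  from has_vector_derivative_add[OF f this] show ?thesis by (simp add: h_def)
qed

lemma lie_alg_of_close_elements:
  assumes one: "aff_one \<in> H" and "\<delta> > 0"
    and f: "(f has_vector_derivative \<xi>) (at 0)" "f 0 = aff_one"
    and close: "\<And>s. s \<noteq> 0 \<Longrightarrow> \<bar>s\<bar> \<le> \<delta> \<Longrightarrow> \<exists>g\<in>H. norm (g - f s) \<le> C * s\<^sup>2"
  shows "\<xi> \<in> lie_alg H"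
proof -
  define \<gamma> where
    "\<gamma> s = (if s \<noteq> 0 \<and> \<bar>s\<bar> \<le> \<delta> then SOME g. g \<in> H \<and> norm (g - f s) \<le> C * s\<^sup>2 else aff_one)" for s
  have \<gamma>: "\<gamma> s \<in> H \<and> norm (\<gamma> s - f s) \<le> C * s\<^sup>2" if "s \<noteq> 0" "\<bar>s\<bar> \<le> \<delta>" for s
    unfolding \<gamma>_def using that by simp (rule someI2_bex[OF close[OF that]], simp)
  have "(\<gamma> has_vector_derivative \<xi>) (at 0)"
  proof (rule has_vector_derivative_quadratically_close[OF f(1) \<open>\<delta> > 0\<close>])
    show "norm (\<gamma> s - f s) \<le> C * s\<^sup>2" if "\<bar>s\<bar> \<le> \<delta>" for s
    proof (cases "s = 0")
      case True
      then show ?thesis by (simp add: \<gamma>_def f(2))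
    next
      case False
      then show ?thesis using \<gamma>[OF False that] by blast
    qed
  qed
  moreover have "\<gamma> s \<in> H" for s
  proof (cases "s \<noteq> 0 \<and> \<bar>s\<bar> \<le> \<delta>")
    case True
    then show ?thesis using \<gamma> by blast
  next
    case False
    then show ?thesis using one by (auto simp: \<gamma>_def)
  qed
  moreover have "\<gamma> 0 = aff_one" by (simp add: \<gamma>_def)
  ultimately show ?thesis
    unfolding lie_alg_def by (intro CollectI exI[of _ \<gamma>]) blast
qed

section \<open>Closed connected subgroups with linear part the boosts\<close>

lemma aff_inv_boost: "aff_inv (boost t, a) = (boost (- t), - (boost (- t) *v a))"
  by (simp add: aff_inv_def matrix_inv_boost)

lemma aff_mult_boost_power:
  "(aff_mult (boost t, p) ^^ k) aff_one = (boost (real k * t), \<Sum>j<k. boost (real j * t) *v p)"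
proof (induction k)
  case 0
  then show ?case by (simp add: aff_one_def)
next
  case (Suc k)
  have "boost t ** boost (real k * t) = boost (real (Suc k) * t)"
    by (simp add: boost_add[symmetric] algebra_simps)
  moreover have "boost t *v (\<Sum>j<k. boost (real j * t) *v p) + p = (\<Sum>j<Suc k. boost (real j * t) *v p)"
    unfolding sum.lessThan_Suc_shift linear_sum[OF matrix_vector_mul_linear]
    by (simp add: matrix_vector_mul_assoc boost_add[symmetric] algebra_simps)
  moreover have "(aff_mult (boost t, p) ^^ Suc k) aff_one
      = aff_mult (boost t, p) (boost (real k * t), \<Sum>j<k. boost (real j * t) *v p)"
    by (simp add: Suc.IH)
  ultimately show ?case by (simp only:) (simp add: aff_mult_def)
qed

lemma norm_boost_power_translation_le:
  assumes "real k * \<bar>t\<bar> \<le> 1/2"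
  shows "norm (snd ((aff_mult (boost t, p) ^^ k) aff_one) - real k *\<^sub>R p)
    \<le> 3 * (real k * \<bar>t\<bar>) * (real k * norm p)"
proof -
  have "snd ((aff_mult (boost t, p) ^^ k) aff_one) - real k *\<^sub>R p = (\<Sum>j<k. boost (real j * t) *v p - p)"
    by (simp add: aff_mult_boost_power sum_subtractf sum_constant_scaleR del: sum_constant)
  also have "norm \<dots> \<le> (\<Sum>j<k. norm (boost (real j * t) *v p - p))"
    by (rule norm_sum)
  also have "\<dots> \<le> (\<Sum>j<k. 3 * (real k * \<bar>t\<bar>) * norm p)"
  proof (rule sum_mono)
    fix j assume "j \<in> {..<k}"
    then have jk: "\<bar>real j * t\<bar> \<le> real k * \<bar>t\<bar>"
      by (simp add: abs_mult mult_right_mono)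
    have "norm (boost (real j * t) *v p - p) \<le> 3 * \<bar>real j * t\<bar> * norm p"
      using jk assms by (intro norm_boost_mult_minus_le_small) linarith
    also have "\<dots> \<le> 3 * (real k * \<bar>t\<bar>) * norm p"
      using jk by (intro mult_right_mono) auto
    finally show "norm (boost (real j * t) *v p - p) \<le> 3 * (real k * \<bar>t\<bar>) * norm p" .
  qed
  also have "\<dots> = 3 * (real k * \<bar>t\<bar>) * (real k * norm p)" by simp
  finally show ?thesis .
qed

lemma tendsto_floor_divide_mult:
  assumes R: "\<And>n. R n > 0" "R \<longlonglongrightarrow> 0" and "s \<ge> 0"
  shows "(\<lambda>n. real (nat \<lfloor>s / R n\<rfloor>) * R n) \<longlonglongrightarrow> s"
proof (rule tendsto_sandwich[of "\<lambda>n. s - R n" _ _ "\<lambda>n. s"])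
  have bounds: "s - R n \<le> real (nat \<lfloor>s / R n\<rfloor>) * R n \<and> real (nat \<lfloor>s / R n\<rfloor>) * R n \<le> s" for n
  proof -
    have "real (nat \<lfloor>s / R n\<rfloor>) = of_int \<lfloor>s / R n\<rfloor>"
      using \<open>s \<ge> 0\<close> R(1)[of n] by simp
    moreover have "(s / R n - 1) * R n \<le> of_int \<lfloor>s / R n\<rfloor> * R n"
      using R(1)[of n] by (intro mult_right_mono) linarith+
    moreover have "of_int \<lfloor>s / R n\<rfloor> * R n \<le> (s / R n) * R n"
      using R(1)[of n] by (intro mult_right_mono) linarith+
    ultimately show ?thesis
      using R(1)[of n] by (simp add: algebra_simps)
  qed
  show "\<forall>\<^sub>F n in sequentially. s - R n \<le> real (nat \<lfloor>s / R n\<rfloor>) * R n"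
    "\<forall>\<^sub>F n in sequentially. real (nat \<lfloor>s / R n\<rfloor>) * R n \<le> s"
    using bounds by simp_all
  show "(\<lambda>n. s - R n) \<longlonglongrightarrow> s" using tendsto_diff[OF tendsto_const R(2), of s] by simp
qed simp

lemma norm_boost_power_minus_le:
  assumes "real k * \<bar>t\<bar> \<le> 1/2"
  shows "norm ((aff_mult (boost t, p) ^^ k) aff_one - (B, x))
    \<le> norm (boost (real k * t) - B) + 3 * (real k * \<bar>t\<bar>) * (real k * norm p) + norm (real k *\<^sub>R p - x)"
proof -
  define g where "g = (aff_mult (boost t, p) ^^ k) aff_one"
  have "norm (g - (B, x)) \<le> norm (fst g - B) + norm (snd g - x)"
    using norm_Pair_le[of "fst g - B" "snd g - x"] by (simp add: minus_prod_def)
  also have "norm (snd g - x) \<le> norm (snd g - real k *\<^sub>R p) + norm (real k *\<^sub>R p - x)"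
    using norm_triangle_ineq[of "snd g - real k *\<^sub>R p" "real k *\<^sub>R p - x"] by simp
  also have "norm (snd g - real k *\<^sub>R p) \<le> 3 * (real k * \<bar>t\<bar>) * (real k * norm p)"
    unfolding g_def using assms by (rule norm_boost_power_translation_le)
  finally show ?thesis by (simp add: g_def aff_mult_boost_power)
qed

lemma tendsto_floor_multiples:
  fixes P :: "nat \<Rightarrow> 'a::real_normed_vector"
  assumes R: "\<And>n. R n > 0" "R \<longlonglongrightarrow> 0" and "s \<ge> 0"
  shows "(\<lambda>n. T n / R n) \<longlonglongrightarrow> \<tau> \<Longrightarrow> (\<lambda>n. real (nat \<lfloor>s / R n\<rfloor>) * T n) \<longlonglongrightarrow> s * \<tau>"
    and "(\<lambda>n. P n /\<^sub>R R n) \<longlonglongrightarrow> v \<Longrightarrow> (\<lambda>n. real (nat \<lfloor>s / R n\<rfloor>) *\<^sub>R P n) \<longlonglongrightarrow> s *\<^sub>R v"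
proof -
  note kR = tendsto_floor_divide_mult[OF R \<open>s \<ge> 0\<close>]
  have R_ne: "R n \<noteq> 0" for n using R(1)[of n] by simp
  show "(\<lambda>n. real (nat \<lfloor>s / R n\<rfloor>) * T n) \<longlonglongrightarrow> s * \<tau>" if "(\<lambda>n. T n / R n) \<longlonglongrightarrow> \<tau>"
    using tendsto_mult[OF kR that] by (simp add: R_ne)
  show "(\<lambda>n. real (nat \<lfloor>s / R n\<rfloor>) *\<^sub>R P n) \<longlonglongrightarrow> s *\<^sub>R v" if "(\<lambda>n. P n /\<^sub>R R n) \<longlonglongrightarrow> v"
    using tendsto_scaleR[OF kR that] by (simp add: R_ne mult.assoc)
qed

lemma tendsto_inverse_translation_scaled:
  assumes R: "\<And>n. R n > 0" "R \<longlonglongrightarrow> 0"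
    and \<tau>: "(\<lambda>n. T n / R n) \<longlonglongrightarrow> \<tau>" and v: "(\<lambda>n. P n /\<^sub>R R n) \<longlonglongrightarrow> v"
  shows "(\<lambda>n. - (boost (- T n) *v P n) /\<^sub>R R n) \<longlonglongrightarrow> - v"
proof -
  have "(\<lambda>n. T n / R n * R n) \<longlonglongrightarrow> \<tau> * 0" by (rule tendsto_mult[OF \<tau> R(2)])
  moreover have "T n / R n * R n = T n" for n using R(1)[of n] by simp
  ultimately have "T \<longlonglongrightarrow> 0" by simp
  then have "(\<lambda>n. boost (- T n) *v (P n /\<^sub>R R n)) \<longlonglongrightarrow> boost (- 0) *v v"
    by (intro bounded_bilinear.tendsto[OF bounded_bilinear_matrix_vector_mult] tendsto_boost
        tendsto_minus v)
  then show ?thesis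
    by (simp add: matrix_scaleR_vector_ac scaleR_matrix_vector_assoc tendsto_minus_cancel_left)
qed

definition boost_alg :: "vec3 \<Rightarrow> vec3 set \<Rightarrow> aff set" where
  "boost_alg w V = {(t *\<^sub>R B1, t *\<^sub>R w + u) | t u. u \<in> V}"

locale boost_group =
  fixes H :: "aff set"
  assumes one_mem: "aff_one \<in> H"
    and mult_mem: "\<And>g h. g \<in> H \<Longrightarrow> h \<in> H \<Longrightarrow> aff_mult g h \<in> H"
    and inv_mem: "\<And>g. g \<in> H \<Longrightarrow> aff_inv g \<in> H"
    and Lpart_eq: "Lpart H = range boost"
    and closed_H: "closed H"
    and connected_H: "connected H"
begin

lemma power_mem: "g \<in> H \<Longrightarrow> (aff_mult g ^^ k) aff_one \<in> H"
  by (induction k) (simp_all add: one_mem mult_mem)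

lemma fst_mem_eq_boost: "g \<in> H \<Longrightarrow> \<exists>t. fst g = boost t"
  using Lpart_eq unfolding Lpart_def by blast

lemma exists_mem_boost: "\<exists>a. (boost t, a) \<in> H"
proof -
  have "boost t \<in> fst ` H" using Lpart_eq by (simp add: Lpart_def)
  then obtain g where "g \<in> H" "fst g = boost t" by auto
  then show ?thesis by (intro exI[of _ "snd g"]) (cases g, simp)
qed

lemma boost_inv_mem: "(boost t, a) \<in> H \<Longrightarrow> (boost (- t), - (boost (- t) *v a)) \<in> H"
  using inv_mem[of "(boost t, a)"] by (simp add: aff_inv_boost)

text \<open>Otherwise the elements of \<open>H\<close> with trivial linear part would form a proper, nonempty,
  open and closed subset of the connected set \<open>H\<close>.\<close>

lemma exists_small_boost:
  assumes "\<epsilon> > 0"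
  shows "\<exists>t a. (boost t, a) \<in> H \<and> t \<noteq> 0 \<and> \<bar>t\<bar> < \<epsilon> \<and> norm a < \<epsilon>"
proof (rule ccontr)
  assume none: "\<not> ?thesis"
  define K where "K = {g \<in> H. fst g = mat 1}"
  have "H \<inter> (\<Union>h\<in>K. ball h \<epsilon>) \<subseteq> K"
  proof
    fix g assume "g \<in> H \<inter> (\<Union>h\<in>K. ball h \<epsilon>)"
    then obtain b where g: "g \<in> H" and b: "(mat 1, b) \<in> H" "dist (mat 1, b) g < \<epsilon>"
      unfolding K_def by auto
    obtain t where t: "fst g = boost t" using fst_mem_eq_boost[OF g] by blast
    have "aff_mult (aff_inv (mat 1, b)) g \<in> H"
      using b(1) g by (intro mult_mem inv_mem)
    then have mem: "(boost t, snd g - b) \<in> H"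
      using aff_inv_boost[of 0 b] by (simp add: aff_mult_def t)
    have "\<bar>t\<bar> \<le> dist (mat 1) (fst g)"
      using abs_le_norm_boost_minus_1[of t] by (simp add: t dist_norm norm_minus_commute)
    also have "\<dots> < \<epsilon>" using dist_fst_le[of "(mat 1, b)" g] b(2) by simp
    finally have "\<bar>t\<bar> < \<epsilon>" .
    moreover have "norm (snd g - b) < \<epsilon>"
      using dist_snd_le[of "(mat 1, b)" g] b(2) by (simp add: dist_norm norm_minus_commute)
    ultimately have "t = 0" using none mem by blast
    then show "g \<in> K" using g t by (simp add: K_def)
  qed
  then have "openin (top_of_set H) K"
    unfolding openin_open
    by (intro exI[of _ "\<Union>h\<in>K. ball h \<epsilon>"]) (auto simp: K_def \<open>\<epsilon> > 0\<close>)
  moreover have "closedin (top_of_set H) K"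
  proof -
    have "closed {g :: aff. fst g = mat 1}" by (intro closed_Collect_eq continuous_intros)
    then show ?thesis unfolding K_def by (simp add: closedin_closed_Int Collect_conj_eq Int_commute)
  qed
  moreover have "aff_one \<in> K" using one_mem by (simp add: K_def aff_one_def)
  ultimately have "K = H" using connected_H unfolding connected_clopen by blast
  moreover obtain a where "(boost 1, a) \<in> H" using exists_mem_boost by blast
  ultimately have "(boost 1, a) \<in> K" by simp
  then show False by (simp add: K_def boost_eq_1_iff)
qed

definition translation_directions :: "vec3 set" where
  "translation_directions = {u. \<forall>s. (mat 1, s *\<^sub>R u) \<in> H}"

lemma subspace_translation_directions: "subspace translation_directions"
  unfolding subspace_def translation_directions_def
proof (intro conjI ballI allI CollectI)
  show "(mat 1, s *\<^sub>R 0) \<in> H" for s using one_mem by (simp add: aff_one_def)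
next
  fix x y s
  assume "x \<in> {u. \<forall>s. (mat 1, s *\<^sub>R u) \<in> H}" "y \<in> {u. \<forall>s. (mat 1, s *\<^sub>R u) \<in> H}"
  then have "aff_mult (mat 1, s *\<^sub>R x) (mat 1, s *\<^sub>R y) \<in> H" by (simp add: mult_mem)
  then show "(mat 1, s *\<^sub>R (x + y)) \<in> H" by (simp add: aff_mult_def scaleR_right_distrib add.commute)
next
  fix c x s assume "x \<in> {u. \<forall>s. (mat 1, s *\<^sub>R u) \<in> H}"
  then have "(mat 1, (s * c) *\<^sub>R x) \<in> H" by blast
  then show "(mat 1, s *\<^sub>R c *\<^sub>R x) \<in> H" by simp
qed

lemma exists_orthogonal_translation_part:
  assumes "(boost t, a) \<in> H"
  shows "\<exists>p. (boost t, p) \<in> H \<and> norm p \<le> norm a \<and> (\<forall>u\<in>translation_directions. inner p u = 0)"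
proof -
  have span_eq: "span translation_directions = translation_directions"
    using subspace_translation_directions by simp
  obtain y z where y: "y \<in> translation_directions"
    and z: "\<And>w. w \<in> translation_directions \<Longrightarrow> orthogonal z w" and a: "a = y + z"
    using orthogonal_subspace_decomp_exists[of translation_directions a] unfolding span_eq by blast
  have "(mat 1, (-1) *\<^sub>R y) \<in> H" using y unfolding translation_directions_def by blast
  then have "aff_mult (mat 1, - y) (boost t, a) \<in> H" using assms by (simp add: mult_mem)
  then have "(boost t, z) \<in> H" by (simp add: aff_mult_def a)
  moreover have "(norm a)\<^sup>2 = (norm y)\<^sup>2 + (norm z)\<^sup>2"
    unfolding a using z[OF y] by (intro norm_add_Pythagorean) (simp add: orthogonal_commute)
  then have "norm z \<le> norm a" by (simp add: power2_le_imp_le)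
  moreover have "\<forall>u\<in>translation_directions. inner z u = 0"
    using z by (simp add: orthogonal_def)
  ultimately show ?thesis by blast
qed

lemma exists_small_orthogonal_boost:
  assumes "\<epsilon> > 0"
  shows "\<exists>t p. (boost t, p) \<in> H \<and> t \<noteq> 0 \<and> \<bar>t\<bar> < \<epsilon> \<and> norm p < \<epsilon>
    \<and> (\<forall>u\<in>translation_directions. inner p u = 0)"
proof -
  obtain t a where ta: "(boost t, a) \<in> H" "t \<noteq> 0" "\<bar>t\<bar> < \<epsilon>" "norm a < \<epsilon>"
    using exists_small_boost[OF assms] by blast
  then obtain p where "(boost t, p) \<in> H" "norm p \<le> norm a" "\<forall>u\<in>translation_directions. inner p u = 0"
    using exists_orthogonal_translation_part by blast
  with ta show ?thesis by (intro exI[of _ t] exI[of _ p]) simp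
qed

text \<open>Powers of exponent \<open>\<lfloor>s / R n\<rfloor>\<close> of elements shrinking in the direction \<open>(\<tau>, v)\<close>
  follow the curve \<open>s \<mapsto> (boost (s \<tau>), s v)\<close> up to an error quadratic in \<open>s\<close>; this replaces
  the exponential map of \<open>H\<close>.\<close>

lemma exists_power_near:
  assumes mem: "\<And>n. (boost (T n), P n) \<in> H" and R: "\<And>n. R n > 0" "R \<longlonglongrightarrow> 0"
    and \<tau>: "(\<lambda>n. T n / R n) \<longlonglongrightarrow> \<tau>" and v: "(\<lambda>n. P n /\<^sub>R R n) \<longlonglongrightarrow> v"
    and s: "0 \<le> s" "s * \<bar>\<tau>\<bar> < 1/2" and "\<epsilon> > 0"
  shows "\<exists>g\<in>H. norm (g - (boost (s * \<tau>), s *\<^sub>R v)) < 3 * (s * \<bar>\<tau>\<bar>) * (s * norm v) + \<epsilon>"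
proof -
  define k where "k n = nat \<lfloor>s / R n\<rfloor>" for n
  note kT = tendsto_floor_multiples(1)[OF R s(1) \<tau>, folded k_def]
    and kP = tendsto_floor_multiples(2)[OF R s(1) v, folded k_def]
  have kT_abs: "(\<lambda>n. real (k n) * \<bar>T n\<bar>) \<longlonglongrightarrow> s * \<bar>\<tau>\<bar>"
    using tendsto_rabs[OF kT] s(1) by (simp add: abs_mult)
  have kP_norm: "(\<lambda>n. real (k n) * norm (P n)) \<longlonglongrightarrow> s * norm v"
    using tendsto_norm[OF kP] s(1) by simp
  have "(\<lambda>n. 3 * (real (k n) * \<bar>T n\<bar>) * (real (k n) * norm (P n))) \<longlonglongrightarrow> 3 * (s * \<bar>\<tau>\<bar>) * (s * norm v)"
    by (rule tendsto_mult[OF tendsto_mult[OF tendsto_const kT_abs] kP_norm])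
  then have "\<forall>\<^sub>F n in sequentially.
      3 * (real (k n) * \<bar>T n\<bar>) * (real (k n) * norm (P n)) < 3 * (s * \<bar>\<tau>\<bar>) * (s * norm v) + \<epsilon> / 3"
    using \<open>\<epsilon> > 0\<close> by (intro order_tendstoD(2)) (assumption, linarith)
  moreover have "\<forall>\<^sub>F n in sequentially. dist (boost (real (k n) * T n)) (boost (s * \<tau>)) < \<epsilon> / 3"
    using tendstoD[OF tendsto_boost[OF kT], of "\<epsilon> / 3"] \<open>\<epsilon> > 0\<close> by simp
  moreover have "\<forall>\<^sub>F n in sequentially. dist (real (k n) *\<^sub>R P n) (s *\<^sub>R v) < \<epsilon> / 3"
    using tendstoD[OF kP, of "\<epsilon> / 3"] \<open>\<epsilon> > 0\<close> by simp
  moreover have "\<forall>\<^sub>F n in sequentially. real (k n) * \<bar>T n\<bar> < 1/2"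
    by (rule order_tendstoD(2)[OF kT_abs s(2)])
  ultimately have "\<forall>\<^sub>F n in sequentially. dist (boost (real (k n) * T n)) (boost (s * \<tau>)) < \<epsilon> / 3 \<and>
      dist (real (k n) *\<^sub>R P n) (s *\<^sub>R v) < \<epsilon> / 3 \<and>
      3 * (real (k n) * \<bar>T n\<bar>) * (real (k n) * norm (P n)) < 3 * (s * \<bar>\<tau>\<bar>) * (s * norm v) + \<epsilon> / 3 \<and>
      real (k n) * \<bar>T n\<bar> < 1/2"
    by eventually_elim blast
  then obtain n where n: "dist (boost (real (k n) * T n)) (boost (s * \<tau>)) < \<epsilon> / 3"
      "dist (real (k n) *\<^sub>R P n) (s *\<^sub>R v) < \<epsilon> / 3"
      "3 * (real (k n) * \<bar>T n\<bar>) * (real (k n) * norm (P n)) < 3 * (s * \<bar>\<tau>\<bar>) * (s * norm v) + \<epsilon> / 3"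
      "real (k n) * \<bar>T n\<bar> < 1/2"
    using eventually_happens'[OF sequentially_bot] by blast
  then have "norm ((aff_mult (boost (T n), P n) ^^ k n) aff_one - (boost (s * \<tau>), s *\<^sub>R v))
      < 3 * (s * \<bar>\<tau>\<bar>) * (s * norm v) + \<epsilon>"
    using norm_boost_power_minus_le[of "k n" "T n" "P n" "boost (s * \<tau>)" "s *\<^sub>R v"]
    by (simp add: dist_norm)
  then show ?thesis using power_mem[OF mem] by blast
qed

lemma translation_direction_of_limit:
  assumes mem: "\<And>n. (boost (T n), P n) \<in> H" and R: "\<And>n. R n > 0" "R \<longlonglongrightarrow> 0"
    and \<tau>: "(\<lambda>n. T n / R n) \<longlonglongrightarrow> 0" and v: "(\<lambda>n. P n /\<^sub>R R n) \<longlonglongrightarrow> v"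
  shows "v \<in> translation_directions"
proof -
  have nonneg: "(mat 1, s *\<^sub>R v) \<in> H" if "s \<ge> 0" for s
  proof -
    have "(mat 1, s *\<^sub>R v) \<in> closure H"
      unfolding closure_approachable dist_norm
      using exists_power_near[OF mem R \<tau> v that] by simp
    then show ?thesis using closed_H by (simp add: closure_closed)
  qed
  have "(mat 1, s *\<^sub>R v) \<in> H" for s
  proof (cases "s \<ge> 0")
    case False
    then have "aff_inv (boost 0, (- s) *\<^sub>R v) \<in> H" using nonneg[of "- s"] by (intro inv_mem) simp
    then show ?thesis unfolding aff_inv_boost by simp
  qed (rule nonneg)
  then show ?thesis unfolding translation_directions_def by blast
qed

lemma exists_limit_direction:
  obtains T P R \<tau> v where "\<And>n. (boost (T n), P n) \<in> H" "\<And>n. R n > 0" "R \<longlonglongrightarrow> 0"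
    "(\<lambda>n. T n / R n) \<longlonglongrightarrow> \<tau>" "(\<lambda>n. P n /\<^sub>R R n) \<longlonglongrightarrow> v" "norm (\<tau>, v) = 1"
    "\<And>n u. u \<in> translation_directions \<Longrightarrow> inner (P n) u = 0"
proof -
  have "\<exists>t p. (boost t, p) \<in> H \<and> t \<noteq> 0 \<and> \<bar>t\<bar> < inverse (Suc n) \<and> norm p < inverse (Suc n)
      \<and> (\<forall>u\<in>translation_directions. inner p u = 0)" for n
    by (rule exists_small_orthogonal_boost) simp
  then obtain T P where TP: "\<And>n. (boost (T n), P n) \<in> H" "\<And>n. T n \<noteq> 0"
    "\<And>n. \<bar>T n\<bar> < inverse (Suc n)" "\<And>n. norm (P n) < inverse (Suc n)"
    "\<And>n u. u \<in> translation_directions \<Longrightarrow> inner (P n) u = 0"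
    by metis
  define r where "r n = norm (T n, P n)" for n
  have r_pos: "r n > 0" for n using TP(2)[of n] by (simp add: r_def zero_prod_def)
  have r_lim: "r \<longlonglongrightarrow> 0"
  proof (rule Lim_null_comparison)
    show "\<forall>\<^sub>F n in sequentially. norm (r n) \<le> 2 * inverse (real (Suc n))"
    proof (intro always_eventually allI)
      fix n
      have "r n \<le> norm (T n) + norm (P n)" unfolding r_def by (rule norm_Pair_le)
      then show "norm (r n) \<le> 2 * inverse (real (Suc n))" using TP(3,4)[of n] r_pos[of n] by simp
    qed
    show "(\<lambda>n. 2 * inverse (real (Suc n))) \<longlonglongrightarrow> 0"
      using tendsto_mult_right_zero[OF LIMSEQ_inverse_real_of_nat] .
  qed
  define z where "z n = inverse (r n) *\<^sub>R (T n, P n)" for n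
  have "z n \<in> sphere 0 1" for n
  proof -
    have "norm (z n) = \<bar>inverse (r n)\<bar> * r n" by (simp only: z_def norm_scaleR real_norm_def r_def)
    then show ?thesis using r_pos[of n] by simp
  qed
  then obtain l \<sigma> where l: "l \<in> sphere 0 1" and \<sigma>: "strict_mono \<sigma>" and lim: "(z \<circ> \<sigma>) \<longlonglongrightarrow> l"
    using seq_compactE[OF compact_imp_seq_compact[OF compact_sphere], of z 0 1] by blast
  show ?thesis
  proof
    show "(boost ((T \<circ> \<sigma>) n), (P \<circ> \<sigma>) n) \<in> H" "(r \<circ> \<sigma>) n > 0" for n
      using TP(1) r_pos by simp_all
    show "(r \<circ> \<sigma>) \<longlonglongrightarrow> 0" by (rule LIMSEQ_subseq_LIMSEQ[OF r_lim \<sigma>])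
    show "(\<lambda>n. (T \<circ> \<sigma>) n / (r \<circ> \<sigma>) n) \<longlonglongrightarrow> fst l"
      using tendsto_fst[OF lim] by (simp add: o_def z_def divide_inverse mult.commute)
    show "(\<lambda>n. (P \<circ> \<sigma>) n /\<^sub>R (r \<circ> \<sigma>) n) \<longlonglongrightarrow> snd l"
      using tendsto_snd[OF lim] by (simp add: o_def z_def)
    show "norm (fst l, snd l) = 1" using l by simp
    show "inner ((P \<circ> \<sigma>) n) u = 0" if "u \<in> translation_directions" for n u
      using TP(5)[OF that] by simp
  qed
qed

lemma limit_direction_boost_part_nonzero:
  assumes mem: "\<And>n. (boost (T n), P n) \<in> H" and R: "\<And>n. R n > 0" "R \<longlonglongrightarrow> 0"
    and \<tau>: "(\<lambda>n. T n / R n) \<longlonglongrightarrow> \<tau>" and v: "(\<lambda>n. P n /\<^sub>R R n) \<longlonglongrightarrow> v" and "norm (\<tau>, v) = 1"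
    and orth: "\<And>n u. u \<in> translation_directions \<Longrightarrow> inner (P n) u = 0"
  shows "\<tau> \<noteq> 0"
proof
  assume "\<tau> = 0"
  then have v_dir: "v \<in> translation_directions"
    using translation_direction_of_limit[OF mem R _ v] \<tau> by simp
  have "(\<lambda>n. inner (P n /\<^sub>R R n) v) \<longlonglongrightarrow> inner v v" by (intro tendsto_inner v tendsto_const)
  moreover have "(\<lambda>n. inner (P n /\<^sub>R R n) v) = (\<lambda>n. 0)" using orth[OF v_dir] by simp
  ultimately have "inner v v = 0" by (simp add: LIMSEQ_const_iff)
  then have "v = 0" by simp
  then show False using \<open>norm (\<tau>, v) = 1\<close> \<open>\<tau> = 0\<close> by (simp add: zero_prod_def[symmetric])
qed

lemma exists_mem_near_direction:
  assumes mem: "\<And>n. (boost (T n), P n) \<in> H" and R: "\<And>n. R n > 0" "R \<longlonglongrightarrow> 0"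
    and \<tau>: "(\<lambda>n. T n / R n) \<longlonglongrightarrow> \<tau>" and v: "(\<lambda>n. P n /\<^sub>R R n) \<longlonglongrightarrow> v"
    and bounds: "\<bar>\<tau>\<bar> \<le> 1" "norm v \<le> 1" and s: "0 < s" "s \<le> 1/4"
  shows "\<exists>g\<in>H. norm (g - (boost (s * \<tau>), s *\<^sub>R v)) \<le> 4 * s\<^sup>2"
proof -
  have "s * \<bar>\<tau>\<bar> \<le> s * 1" using bounds(1) s(1) by (intro mult_left_mono) simp_all
  then have st: "s * \<bar>\<tau>\<bar> < 1/2" using s(2) by simp
  have "\<exists>g\<in>H. norm (g - (boost (s * \<tau>), s *\<^sub>R v)) < 3 * (s * \<bar>\<tau>\<bar>) * (s * norm v) + s\<^sup>2"
    by (rule exists_power_near[OF mem R \<tau> v _ st]) (use s in simp_all)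
  then obtain g where "g \<in> H" and g: "norm (g - (boost (s * \<tau>), s *\<^sub>R v)) < 3 * (s * \<bar>\<tau>\<bar>) * (s * norm v) + s\<^sup>2"
    by blast
  have "(s * \<bar>\<tau>\<bar>) * (s * norm v) \<le> s * s"
    using bounds s(1) by (intro mult_mono) (auto simp: mult_left_le)
  then show ?thesis using \<open>g \<in> H\<close> g by (intro bexI[of _ g]) (simp_all add: power2_eq_square)
qed

lemma exists_lie_alg_B1: "\<exists>w. (B1, w) \<in> lie_alg H"
proof -
  obtain T P R \<tau> v where mem: "\<And>n. (boost (T n), P n) \<in> H" and R: "\<And>n. R n > 0" "R \<longlonglongrightarrow> 0"
    and \<tau>: "(\<lambda>n. T n / R n) \<longlonglongrightarrow> \<tau>" and v: "(\<lambda>n. P n /\<^sub>R R n) \<longlonglongrightarrow> v" and unit: "norm (\<tau>, v) = 1"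
    and orth: "\<And>n u. u \<in> translation_directions \<Longrightarrow> inner (P n) u = 0"
    using exists_limit_direction by blast
  have "\<tau> \<noteq> 0" by (rule limit_direction_boost_part_nonzero[OF mem R \<tau> v unit orth])
  have bounds: "\<bar>\<tau>\<bar> \<le> 1" "norm v \<le> 1"
    using norm_fst_le[of \<tau> v] norm_snd_le[of v \<tau>] unit by simp_all
  have mem_inv: "(boost (- T n), - (boost (- T n) *v P n)) \<in> H" for n
    by (rule boost_inv_mem[OF mem])
  have \<tau>_inv: "(\<lambda>n. - T n / R n) \<longlonglongrightarrow> - \<tau>" using tendsto_minus[OF \<tau>] by simp
  note v_inv = tendsto_inverse_translation_scaled[OF R \<tau> v]
  have close: "\<exists>g\<in>H. norm (g - (boost (s * \<tau>), s *\<^sub>R v)) \<le> 4 * s\<^sup>2" if "s \<noteq> 0" "\<bar>s\<bar> \<le> 1/4" for s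
  proof (cases "s > 0")
    case True
    then show ?thesis using that by (intro exists_mem_near_direction[OF mem R \<tau> v bounds]) simp_all
  next
    case False
    txt \<open>For \<open>s < 0\<close> use the inverse elements, whose limit direction is \<open>(- \<tau>, - v)\<close>.\<close>
    then have "\<exists>g\<in>H. norm (g - (boost (- s * - \<tau>), - s *\<^sub>R - v)) \<le> 4 * (- s)\<^sup>2"
      using that bounds
      by (intro exists_mem_near_direction[OF mem_inv R \<tau>_inv v_inv]) simp_all
    then show ?thesis by simp
  qed
  have deriv: "((\<lambda>s. (boost (s * \<tau>), s *\<^sub>R v)) has_vector_derivative (\<tau> *\<^sub>R B1, v)) (at 0)"
    using boost_has_vector_derivative
    by (intro has_vector_derivative_Pair) (auto intro!: derivative_eq_intros)
  have "(\<tau> *\<^sub>R B1, v) \<in> lie_alg H"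
    by (rule lie_alg_of_close_elements[where \<delta> = "1/4" and C = 4, OF one_mem _ deriv _ close])
      (simp_all add: aff_one_def)
  then have "inverse \<tau> *\<^sub>R (\<tau> *\<^sub>R B1, v) \<in> lie_alg H" by (rule lie_alg_scaleR)
  then show ?thesis using \<open>\<tau> \<noteq> 0\<close> by auto
qed

lemma lie_alg_fst: "\<xi> \<in> lie_alg H \<Longrightarrow> fst \<xi> = fst \<xi> $ 1 $ 2 *\<^sub>R B1"
proof -
  assume "\<xi> \<in> lie_alg H"
  then obtain \<gamma> where \<gamma>: "\<forall>t. \<gamma> t \<in> H" "\<gamma> 0 = aff_one" "(\<gamma> has_vector_derivative \<xi>) (at 0)"
    unfolding lie_alg_def by blast
  show ?thesis
  proof (rule boost_curve_derivative)
    show "fst (\<gamma> t) \<in> range boost" for t using \<gamma>(1) Lpart_eq by (auto simp: Lpart_def)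
    show "fst (\<gamma> 0) = mat 1" using \<gamma>(2) by (simp add: aff_one_def)
    show "((\<lambda>t. fst (\<gamma> t)) has_vector_derivative fst \<xi>) (at 0)"
      by (rule bounded_linear.has_vector_derivative[OF bounded_linear_fst \<gamma>(3)])
  qed
qed

definition lie_translations :: "vec3 set" where
  "lie_translations = {v. (0, v) \<in> lie_alg H}"

lemma subspace_lie_translations: "subspace lie_translations"
  unfolding subspace_def lie_translations_def
proof (intro conjI ballI allI CollectI)
  show "(0, 0) \<in> lie_alg H" using lie_alg_zero[OF one_mem] by (simp add: zero_prod_def)
next
  fix x y assume "x \<in> {v. (0, v) \<in> lie_alg H}" "y \<in> {v. (0, v) \<in> lie_alg H}"
  then show "(0, x + y) \<in> lie_alg H" using lie_alg_add[OF mult_mem, of "(0, x)" "(0, y)"] by simp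
next
  fix c x assume "x \<in> {v. (0, v) \<in> lie_alg H}"
  then show "(0, c *\<^sub>R x) \<in> lie_alg H" using lie_alg_scaleR[of "(0, x)" H c] by simp
qed

lemma B1_mult_lie_translations:
  assumes "v \<in> lie_translations"
  shows "B1 *v v \<in> lie_translations"
proof -
  have Ad_mem: "(0, boost s *v v) \<in> lie_alg H" for s
  proof -
    obtain a where a: "(boost s, a) \<in> H" using exists_mem_boost by blast
    have "Ad (boost s, a) (0, v) \<in> lie_alg H"
      using assms a inv_mem[OF a] invertible_boost
      by (intro lie_alg_Ad[OF mult_mem]) (simp_all add: lie_translations_def)
    then show ?thesis by (simp add: Ad_def)
  qed
  have "(0, boost 1 *v v) - (0, boost (- 1) *v v) \<in> lie_alg H"
    by (rule lie_alg_diff[OF mult_mem Ad_mem Ad_mem])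
  moreover have "boost 1 *v v - boost (- 1) *v v = (2 * sinh 1) *\<^sub>R (B1 *v v)"
    by (simp add: vec3_eq_iff matrix_vector_mult_nth_3 algebra_simps)
  ultimately have "inverse (2 * sinh 1) *\<^sub>R (0, (2 * sinh 1) *\<^sub>R (B1 *v v)) \<in> lie_alg H"
    by (intro lie_alg_scaleR) simp
  then show ?thesis by (simp add: lie_translations_def)
qed

lemma lie_alg_eq_boost_alg:
  assumes w: "(B1, w) \<in> lie_alg H"
  shows "lie_alg H = boost_alg w lie_translations"
proof
  show "lie_alg H \<subseteq> boost_alg w lie_translations"
  proof
    fix \<xi> assume \<xi>: "\<xi> \<in> lie_alg H"
    define t where "t = fst \<xi> $ 1 $ 2"
    have "\<xi> - t *\<^sub>R (B1, w) \<in> lie_alg H" by (rule lie_alg_diff[OF mult_mem \<xi> lie_alg_scaleR[OF w]])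
    moreover have "\<xi> - t *\<^sub>R (B1, w) = (0, snd \<xi> - t *\<^sub>R w)"
      using lie_alg_fst[OF \<xi>] by (simp add: prod_eq_iff t_def)
    ultimately have "snd \<xi> - t *\<^sub>R w \<in> lie_translations" by (simp add: lie_translations_def)
    moreover have "\<xi> = (t *\<^sub>R B1, t *\<^sub>R w + (snd \<xi> - t *\<^sub>R w))"
      using lie_alg_fst[OF \<xi>] by (simp add: prod_eq_iff t_def)
    ultimately show "\<xi> \<in> boost_alg w lie_translations" unfolding boost_alg_def by blast
  qed
  show "boost_alg w lie_translations \<subseteq> lie_alg H"
  proof
    fix \<xi> assume "\<xi> \<in> boost_alg w lie_translations"
    then obtain t u where \<xi>: "\<xi> = (t *\<^sub>R B1, t *\<^sub>R w + u)" and u: "(0, u) \<in> lie_alg H"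
      by (auto simp: boost_alg_def lie_translations_def)
    have "t *\<^sub>R (B1, w) + (0, u) \<in> lie_alg H"
      by (rule lie_alg_add[OF mult_mem lie_alg_scaleR[OF w] u])
    then show "\<xi> \<in> lie_alg H" by (simp add: \<xi>)
  qed
qed

end

section \<open>Invariant subspaces and the normal forms\<close>

text \<open>The sum of those eigenlines \<open>\<real>(e\<^sub>1 + e\<^sub>2)\<close>, \<open>\<real>(e\<^sub>1 - e\<^sub>2)\<close>, \<open>\<real>e\<^sub>3\<close> of \<open>B1\<close> that are
  selected by \<open>a\<close>, \<open>b\<close>, \<open>c\<close>.\<close>

definition B1_eigenspan :: "bool \<Rightarrow> bool \<Rightarrow> bool \<Rightarrow> vec3 set" where
  "B1_eigenspan a b c =
     {x. (\<not> a \<longrightarrow> x $ 1 + x $ 2 = 0) \<and> (\<not> b \<longrightarrow> x $ 1 = x $ 2) \<and> (\<not> c \<longrightarrow> x $ 3 = 0)}"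

lemma B1_eigen_decomposition:
  "x = ((x $ 1 + x $ 2) / 2) *\<^sub>R (e 1 + e 2) + ((x $ 1 - x $ 2) / 2) *\<^sub>R (e 1 - e 2) + x $ 3 *\<^sub>R e 3"
  by (simp add: vec3_eq_iff field_simps)

text \<open>The projections onto the eigenlines are the polynomials \<open>(B1\<^sup>2 \<plusminus> B1)/2\<close> and \<open>1 - B1\<^sup>2\<close> in \<open>B1\<close>.\<close>

lemma B1_invariant_eigencomponents:
  assumes V: "subspace V" and inv: "\<And>v. v \<in> V \<Longrightarrow> B1 *v v \<in> V" and u: "u \<in> V"
  shows "((u $ 1 + u $ 2) / 2) *\<^sub>R (e 1 + e 2) \<in> V" "((u $ 1 - u $ 2) / 2) *\<^sub>R (e 1 - e 2) \<in> V"
    "u $ 3 *\<^sub>R e 3 \<in> V"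
proof -
  note scale = subspace_scale[OF V] and add = subspace_add[OF V]
  have B1u: "B1 *v u \<in> V" "B1 *v (B1 *v u) \<in> V" using inv u by blast+
  have "((u $ 1 + u $ 2) / 2) *\<^sub>R (e 1 + e 2) = (1/2) *\<^sub>R (B1 *v (B1 *v u) + B1 *v u)"
    by (simp add: vec3_eq_iff)
  then show "((u $ 1 + u $ 2) / 2) *\<^sub>R (e 1 + e 2) \<in> V" by (simp only:) (intro scale add B1u)
  have "((u $ 1 - u $ 2) / 2) *\<^sub>R (e 1 - e 2) = (1/2) *\<^sub>R (B1 *v (B1 *v u) + (-1) *\<^sub>R (B1 *v u))"
    by (simp add: vec3_eq_iff field_simps)
  then show "((u $ 1 - u $ 2) / 2) *\<^sub>R (e 1 - e 2) \<in> V" by (simp only:) (intro scale add B1u)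
  have "u $ 3 *\<^sub>R e 3 = u + (-1) *\<^sub>R (B1 *v (B1 *v u))"
    by (simp add: vec3_eq_iff)
  then show "u $ 3 *\<^sub>R e 3 \<in> V" by (simp only:) (intro scale add B1u u)
qed

lemma B1_invariant_subspace_eq:
  assumes V: "subspace V" and inv: "\<And>v. v \<in> V \<Longrightarrow> B1 *v v \<in> V"
  shows "V = B1_eigenspan (e 1 + e 2 \<in> V) (e 1 - e 2 \<in> V) (e 3 \<in> V)"
proof -
  have unscale: "x \<in> V" if "c *\<^sub>R x \<in> V" "c \<noteq> 0" for c x
    using subspace_scale[OF V that(1), of "inverse c"] that(2) by simp
  show ?thesis
  proof
    show "V \<subseteq> B1_eigenspan (e 1 + e 2 \<in> V) (e 1 - e 2 \<in> V) (e 3 \<in> V)"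
    proof
      fix u assume u: "u \<in> V"
      have "e 1 + e 2 \<in> V" if "u $ 1 + u $ 2 \<noteq> 0"
        using unscale[OF B1_invariant_eigencomponents(1)[OF V inv u]] that by simp
      moreover have "e 1 - e 2 \<in> V" if "u $ 1 \<noteq> u $ 2"
        using unscale[OF B1_invariant_eigencomponents(2)[OF V inv u]] that by simp
      moreover have "e 3 \<in> V" if "u $ 3 \<noteq> 0"
        using unscale[OF B1_invariant_eigencomponents(3)[OF V inv u]] that by simp
      ultimately show "u \<in> B1_eigenspan (e 1 + e 2 \<in> V) (e 1 - e 2 \<in> V) (e 3 \<in> V)"
        unfolding B1_eigenspan_def by auto
    qed
    show "B1_eigenspan (e 1 + e 2 \<in> V) (e 1 - e 2 \<in> V) (e 3 \<in> V) \<subseteq> V"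
    proof
      fix x assume x: "x \<in> B1_eigenspan (e 1 + e 2 \<in> V) (e 1 - e 2 \<in> V) (e 3 \<in> V)"
      have zero: "0 \<in> V" using V by (rule subspace_0)
      note scale = subspace_scale[OF V] and add = subspace_add[OF V]
      have "((x $ 1 + x $ 2) / 2) *\<^sub>R (e 1 + e 2) \<in> V" "((x $ 1 - x $ 2) / 2) *\<^sub>R (e 1 - e 2) \<in> V"
        "x $ 3 *\<^sub>R e 3 \<in> V"
        using x zero scale unfolding B1_eigenspan_def by auto
      then show "x \<in> V" by (subst B1_eigen_decomposition) (intro add)
    qed
  qed
qed

lemma boost_alg_orbit:
  "{fst \<xi> *v y + snd \<xi> | \<xi>. \<xi> \<in> boost_alg w V} = {t *\<^sub>R (B1 *v y + w) + u | t u. u \<in> V}"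
proof -
  have point: "(t *\<^sub>R B1) *v y + (t *\<^sub>R w + u) = t *\<^sub>R (B1 *v y + w) + u" for t u
    by (simp add: scaleR_matrix_vector_assoc algebra_simps)
  show ?thesis
  proof (intro set_eqI iffI)
    fix z assume "z \<in> {fst \<xi> *v y + snd \<xi> | \<xi>. \<xi> \<in> boost_alg w V}"
    then obtain t u where "u \<in> V" "z = (t *\<^sub>R B1) *v y + (t *\<^sub>R w + u)"
      unfolding boost_alg_def by auto
    then show "z \<in> {t *\<^sub>R (B1 *v y + w) + u | t u. u \<in> V}" unfolding point by blast
  next
    fix z assume "z \<in> {t *\<^sub>R (B1 *v y + w) + u | t u. u \<in> V}"
    then obtain t u where "u \<in> V" "z = t *\<^sub>R (B1 *v y + w) + u" by blast
    then show "z \<in> {fst \<xi> *v y + snd \<xi> | \<xi>. \<xi> \<in> boost_alg w V}"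
      unfolding boost_alg_def
      by (intro CollectI exI[of _ "(t *\<^sub>R B1, t *\<^sub>R w + u)"]) (auto simp: point)
  qed
qed

lemma boost_alg_orbit_dim_2:
  assumes "dim {fst \<xi> *v y + snd \<xi> | \<xi>. \<xi> \<in> boost_alg w V} = 2"
  shows "V \<noteq> {0}" "V \<noteq> UNIV" "V = {x. x $ 3 = 0} \<Longrightarrow> w $ 3 = 0"
proof -
  define q where "q = B1 *v y + w"
  note orbit = boost_alg_orbit[of y w V, folded q_def]
  have not_univ: "{t *\<^sub>R q + u | t u. u \<in> V} \<noteq> UNIV"
  proof
    assume "{t *\<^sub>R q + u | t u. u \<in> V} = UNIV"
    then have "dim {t *\<^sub>R q + u | t u. u \<in> V} = 3" by simp
    then show False using assms unfolding orbit by simp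
  qed
  show "V \<noteq> {0}"
  proof
    assume "V = {0}"
    then have "{t *\<^sub>R q + u | t u. u \<in> V} \<subseteq> span {q}" by (auto intro: span_scale span_base)
    from dim_le_card[OF this] show False using assms unfolding orbit by simp
  qed
  show "V \<noteq> UNIV"
  proof
    assume "V = UNIV"
    then have "z \<in> {t *\<^sub>R q + u | t u. u \<in> V}" for z by (intro CollectI exI[of _ 0] exI[of _ z]) simp
    then show False using not_univ by blast
  qed
  show "w $ 3 = 0" if V: "V = {x. x $ 3 = 0}"
  proof (rule ccontr)
    assume "w $ 3 \<noteq> 0"
    then have "q $ 3 \<noteq> 0" by (simp add: q_def)
    then have "z \<in> {t *\<^sub>R q + u | t u. u \<in> V}" for z
      by (intro CollectI exI[of _ "z $ 3 / q $ 3"] exI[of _ "z - (z $ 3 / q $ 3) *\<^sub>R q"]) (simp add: V)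
    then show False using not_univ by blast
  qed
qed

lemma Ad_aff_translation_boost_alg: "Ad (mat 1, r) ` boost_alg w V = boost_alg (w - B1 *v r) V"
proof -
  have "matrix_inv (mat 1 :: mat3) = mat 1" by (rule matrix_inv_eqI) simp_all
  then have Ad_eq: "Ad (mat 1, r) (t *\<^sub>R B1, t *\<^sub>R w + u) = (t *\<^sub>R B1, t *\<^sub>R (w - B1 *v r) + u)" for t u
    by (simp add: Ad_def Let_def scaleR_matrix_vector_assoc algebra_simps)
  show ?thesis
  proof (intro set_eqI iffI)
    fix \<xi> assume "\<xi> \<in> Ad (mat 1, r) ` boost_alg w V"
    then obtain t u where "u \<in> V" "\<xi> = Ad (mat 1, r) (t *\<^sub>R B1, t *\<^sub>R w + u)"
      unfolding boost_alg_def by blast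
    then show "\<xi> \<in> boost_alg (w - B1 *v r) V" unfolding Ad_eq boost_alg_def by blast
  next
    fix \<xi> assume "\<xi> \<in> boost_alg (w - B1 *v r) V"
    then obtain t u where "u \<in> V" "\<xi> = Ad (mat 1, r) (t *\<^sub>R B1, t *\<^sub>R w + u)"
      unfolding boost_alg_def Ad_eq by blast
    then show "\<xi> \<in> Ad (mat 1, r) ` boost_alg w V" unfolding boost_alg_def by blast
  qed
qed

lemma boost_alg_cong:
  assumes "subspace V" "w - w' \<in> V"
  shows "boost_alg w V = boost_alg w' V"
proof -
  have subset: "boost_alg w V \<subseteq> boost_alg w' V" if "w - w' \<in> V" for w w'
  proof
    fix \<xi> assume "\<xi> \<in> boost_alg w V"
    then obtain t u where \<xi>: "\<xi> = (t *\<^sub>R B1, t *\<^sub>R w + u)" and "u \<in> V"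
      unfolding boost_alg_def by blast
    then have "t *\<^sub>R (w - w') + u \<in> V" using assms(1) that by (intro subspace_add subspace_scale)
    moreover have "t *\<^sub>R w + u = t *\<^sub>R w' + (t *\<^sub>R (w - w') + u)" by (simp add: algebra_simps)
    ultimately show "\<xi> \<in> boost_alg w' V" unfolding boost_alg_def \<xi> by blast
  qed
  have "w' - w \<in> V" using subspace_neg[OF assms] by simp
  with subset assms(2) show ?thesis by (intro equalityI)
qed

lemma conj_alg_Ad_boost_alg:
  assumes P: "P \<in> SOo12" and \<g>: "\<g> = Ad (P, 0) ` boost_alg w V"
    and V: "subspace V" and w': "w' - B1 *v r - w \<in> V"
  shows "conj_alg \<g> (boost_alg w' V)"
proof -
  have "Ad (P, P *v r) \<xi> = Ad (P, 0) (Ad (mat 1, r) \<xi>)" for \<xi>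
    using invertible_SOo12[OF P]
    by (simp add: Ad_def Let_def matrix_inv_eqI[of "mat 1" "mat 1"] matrix_vector_mul_assoc
        matrix_vector_mult_diff_distrib)
  then have "Ad (P, P *v r) ` boost_alg w' V = Ad (P, 0) ` boost_alg (w' - B1 *v r) V"
    by (simp add: image_image Ad_aff_translation_boost_alg[symmetric])
  also have "\<dots> = \<g>" using boost_alg_cong[OF V w'] \<g> by simp
  finally show ?thesis unfolding conj_alg_def SOo12R3_def using P by blast
qed

lemma boost_alg_eqI:
  assumes "\<And>t u. u \<in> V \<Longrightarrow> (t *\<^sub>R B1, t *\<^sub>R w + u) \<in> A"
    and "\<And>\<xi>. \<xi> \<in> A \<Longrightarrow> \<exists>t u. u \<in> V \<and> \<xi> = (t *\<^sub>R B1, t *\<^sub>R w + u)"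
  shows "A = boost_alg w V"
  unfolding boost_alg_def using assms by blast

lemma alg_i_eq: "alg_i = boost_alg 0 (B1_eigenspan False False True)"
proof (rule boost_alg_eqI)
  show "(t *\<^sub>R B1, t *\<^sub>R 0 + u) \<in> alg_i" if "u \<in> B1_eigenspan False False True" for t u
    unfolding alg_i_def using that
    by (intro CollectI exI[of _ t] exI[of _ "u $ 3"]) (auto simp: B1_eigenspan_def vec3_eq_iff)
qed (auto simp: alg_i_def B1_eigenspan_def)

lemma alg_ii_eq: "alg_ii = boost_alg 0 (B1_eigenspan True True False)"
proof (rule boost_alg_eqI)
  show "(t *\<^sub>R B1, t *\<^sub>R 0 + u) \<in> alg_ii" if "u \<in> B1_eigenspan True True False" for t u
    unfolding alg_ii_def using that
    by (intro CollectI exI[of _ t] exI[of _ "u $ 1"] exI[of _ "u $ 2"])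
      (auto simp: B1_eigenspan_def vec3_eq_iff)
qed (auto simp: alg_ii_def B1_eigenspan_def)

lemma alg_iii_eq: "alg_iii = boost_alg 0 (B1_eigenspan True False True)"
proof (rule boost_alg_eqI)
  show "(t *\<^sub>R B1, t *\<^sub>R 0 + u) \<in> alg_iii" if "u \<in> B1_eigenspan True False True" for t u
    unfolding alg_iii_def using that
    by (intro CollectI exI[of _ t] exI[of _ "u $ 1"] exI[of _ "u $ 3"])
      (auto simp: B1_eigenspan_def vec3_eq_iff)
qed (auto simp: alg_iii_def B1_eigenspan_def)

lemma alg_iv_eq: "alg_iv = boost_alg 0 (B1_eigenspan False True True)"
proof (rule boost_alg_eqI)
  show "(t *\<^sub>R B1, t *\<^sub>R 0 + u) \<in> alg_iv" if "u \<in> B1_eigenspan False True True" for t u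
    unfolding alg_iv_def using that
    by (intro CollectI exI[of _ t] exI[of _ "u $ 1"] exI[of _ "u $ 3"])
      (auto simp: B1_eigenspan_def vec3_eq_iff)
qed (auto simp: alg_iv_def B1_eigenspan_def)

lemma alg_v_plus_eq: "alg_v_plus \<beta> = boost_alg (\<beta> *\<^sub>R e 3) (B1_eigenspan True False False)"
proof (rule boost_alg_eqI)
  show "(t *\<^sub>R B1, t *\<^sub>R \<beta> *\<^sub>R e 3 + u) \<in> alg_v_plus \<beta>" if "u \<in> B1_eigenspan True False False" for t u
    unfolding alg_v_plus_def using that
    by (intro CollectI exI[of _ t] exI[of _ "u $ 1"]) (auto simp: B1_eigenspan_def vec3_eq_iff)
  show "\<exists>t u. u \<in> B1_eigenspan True False False \<and> \<xi> = (t *\<^sub>R B1, t *\<^sub>R \<beta> *\<^sub>R e 3 + u)"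
    if mem: "\<xi> \<in> alg_v_plus \<beta>" for \<xi>
  proof -
    obtain t s where "\<xi> = (t *\<^sub>R B1, s *\<^sub>R (e 1 + e 2) + (t * \<beta>) *\<^sub>R e 3)"
      using mem unfolding alg_v_plus_def by blast
    then show ?thesis
      by (intro exI[of _ t] exI[of _ "s *\<^sub>R (e 1 + e 2)"]) (simp add: B1_eigenspan_def add.commute)
  qed
qed

lemma alg_v_minus_eq: "alg_v_minus \<beta> = boost_alg (\<beta> *\<^sub>R e 3) (B1_eigenspan False True False)"
proof (rule boost_alg_eqI)
  show "(t *\<^sub>R B1, t *\<^sub>R \<beta> *\<^sub>R e 3 + u) \<in> alg_v_minus \<beta>" if "u \<in> B1_eigenspan False True False" for t u
    unfolding alg_v_minus_def using that
    by (intro CollectI exI[of _ t] exI[of _ "u $ 1"]) (auto simp: B1_eigenspan_def vec3_eq_iff)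
  show "\<exists>t u. u \<in> B1_eigenspan False True False \<and> \<xi> = (t *\<^sub>R B1, t *\<^sub>R \<beta> *\<^sub>R e 3 + u)"
    if mem: "\<xi> \<in> alg_v_minus \<beta>" for \<xi>
  proof -
    obtain t s where "\<xi> = (t *\<^sub>R B1, s *\<^sub>R (e 1 - e 2) + (t * \<beta>) *\<^sub>R e 3)"
      using mem unfolding alg_v_minus_def by blast
    then show ?thesis
      by (intro exI[of _ t] exI[of _ "s *\<^sub>R (e 1 - e 2)"]) (simp add: B1_eigenspan_def add.commute)
  qed
qed

lemma subspace_B1_eigenspan: "subspace (B1_eigenspan a b c)"
  by (auto simp: subspace_def B1_eigenspan_def simp flip: distrib_left)

lemma conj_alg_normal_forms:
  assumes P: "P \<in> SOo12" and \<g>: "\<g> = Ad (P, 0) ` boost_alg w (B1_eigenspan a b c)"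
    and nonzero: "B1_eigenspan a b c \<noteq> {0}" and proper: "B1_eigenspan a b c \<noteq> UNIV"
    and w3: "B1_eigenspan a b c = {x. x $ 3 = 0} \<Longrightarrow> w $ 3 = 0"
  shows "conj_alg \<g> alg_i \<or> conj_alg \<g> alg_ii \<or> conj_alg \<g> alg_iii \<or> conj_alg \<g> alg_iv \<or>
    (\<exists>\<beta>. conj_alg \<g> (alg_v_plus \<beta>) \<or> conj_alg \<g> (alg_v_minus \<beta>))"
proof -
  txt \<open>Conjugating by the translation \<open>r\<close> removes the \<open>e\<^sub>1\<close>, \<open>e\<^sub>2\<close> components of \<open>w\<close>.\<close>
  define r where "r = (- w $ 2) *\<^sub>R e 1 + (- w $ 1) *\<^sub>R e 2"
  have shift: "w' - B1 *v r - w = w' - w $ 3 *\<^sub>R e 3" for w'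
    by (simp add: r_def vec3_eq_iff matrix_vector_mult_nth_3)
  note conj = conj_alg_Ad_boost_alg[OF P \<g> subspace_B1_eigenspan, of _ r, unfolded shift]
  have to_0: "conj_alg \<g> (boost_alg 0 (B1_eigenspan a b c))" if "c \<or> w $ 3 = 0"
    using that by (intro conj) (auto simp: B1_eigenspan_def)
  have to_e3: "conj_alg \<g> (boost_alg (w $ 3 *\<^sub>R e 3) (B1_eigenspan a b c))"
    by (intro conj) (simp add: B1_eigenspan_def)
  have univ: "B1_eigenspan True True True = UNIV" and zero: "B1_eigenspan False False False = {0}"
    and plane: "B1_eigenspan True True False = {x. x $ 3 = 0}"
    by (auto simp: B1_eigenspan_def vec3_eq_iff)
  show ?thesis
  proof (cases c)
    case True
    then have "conj_alg \<g> (boost_alg 0 (B1_eigenspan a b True))" using to_0 by simp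
    then show ?thesis
      using proper univ True by (cases a; cases b) (simp_all add: alg_i_eq alg_iii_eq alg_iv_eq)
  next
    case False
    then have "conj_alg \<g> (boost_alg (w $ 3 *\<^sub>R e 3) (B1_eigenspan a b False))" using to_e3 by simp
    moreover have "conj_alg \<g> (boost_alg 0 (B1_eigenspan True True False))" if "a" "b"
      using that False to_0 w3 plane by simp
    ultimately show ?thesis
      using nonzero zero False
      by (cases a; cases b) (simp_all add: alg_ii_eq alg_v_plus_eq alg_v_minus_eq, blast+)
  qed
qed

lemma boost_group_Ad_conj:
  assumes G: "is_subgroup G" "closed G" "connected G" and P: "invertible P"
    and L: "Lpart G = (\<lambda>A. P ** A ** matrix_inv P) ` Agrp"
  shows "boost_group (Ad (matrix_inv P, 0) ` G)"
proof
  have Pi: "invertible (matrix_inv P)" "matrix_inv (matrix_inv P) = P"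
    using P by (simp_all add: invertible_matrix_inv matrix_inv_matrix_inv)
  have one: "aff_one \<in> G" and mult: "\<And>g h. g \<in> G \<Longrightarrow> h \<in> G \<Longrightarrow> aff_mult g h \<in> G"
    and inv: "\<And>g. g \<in> G \<Longrightarrow> aff_inv g \<in> G" and lin: "\<And>g. g \<in> G \<Longrightarrow> invertible (fst g)"
    using G(1) invertible_SOo12 unfolding is_subgroup_def SOo12R3_def by auto
  show "aff_one \<in> Ad (matrix_inv P, 0) ` G"
    using imageI[OF one, of "Ad (matrix_inv P, 0)"] by (simp add: Ad_linear_elem_aff_one[OF Pi(1)])
  show "aff_mult g h \<in> Ad (matrix_inv P, 0) ` G"
    if gh: "g \<in> Ad (matrix_inv P, 0) ` G" "h \<in> Ad (matrix_inv P, 0) ` G" for g h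
  proof -
    obtain g' h' where "g' \<in> G" "h' \<in> G" "g = Ad (matrix_inv P, 0) g'" "h = Ad (matrix_inv P, 0) h'"
      using gh by blast
    then show ?thesis using mult by (simp add: Ad_linear_elem_aff_mult[OF Pi(1), symmetric])
  qed
  show "aff_inv g \<in> Ad (matrix_inv P, 0) ` G" if g: "g \<in> Ad (matrix_inv P, 0) ` G" for g
  proof -
    obtain g' where "g' \<in> G" "g = Ad (matrix_inv P, 0) g'" using g by blast
    then show ?thesis using inv lin by (simp add: Ad_linear_elem_aff_inv[OF Pi(1), symmetric])
  qed
  have cancel: "matrix_inv P ** (P ** A ** matrix_inv P) ** P = A" for A
    using P by (simp add: matrix_mul_assoc matrix_inv_left)
  have "fst ` Ad (matrix_inv P, 0) ` G = (\<lambda>A. matrix_inv P ** A ** P) ` fst ` G"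
    by (simp add: image_image Ad_linear_elem Pi(2))
  also have "\<dots> = Agrp" using L by (simp add: Lpart_def image_image cancel)
  finally show "Lpart (Ad (matrix_inv P, 0) ` G) = range boost"
    by (simp add: Lpart_def Agrp_eq_range_boost)
  have "inj (Ad (matrix_inv P, 0))"
    by (rule inj_on_inverseI[of _ "Ad (matrix_inv (matrix_inv P), 0)"]) (rule Ad_linear_elem_inverse[OF Pi(1)])
  then show "closed (Ad (matrix_inv P, 0) ` G)"
    by (intro closed_injective_linear_image G(2) bounded_linear.linear[OF bounded_linear_Ad_linear_elem])
  show "connected (Ad (matrix_inv P, 0) ` G)"
    by (intro connected_linear_image G(3) bounded_linear.linear[OF bounded_linear_Ad_linear_elem])
qed

theorem lemma3p2:
  fixes G :: "aff set"
  assumes "is_subgroup G" and "closed G" and "connected G"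
    and "cohomogeneity_one G"
    and "\<exists>P\<in>SOo12. Lpart G = (\<lambda>A. P ** A ** matrix_inv P) ` Agrp"
  shows "conj_alg (lie_alg G) alg_i \<or> conj_alg (lie_alg G) alg_ii \<or>
         conj_alg (lie_alg G) alg_iii \<or> conj_alg (lie_alg G) alg_iv \<or>
         (\<exists>\<beta>::real. conj_alg (lie_alg G) (alg_v_plus \<beta>) \<or> conj_alg (lie_alg G) (alg_v_minus \<beta>))"
proof -
  obtain P where P: "P \<in> SOo12" and L: "Lpart G = (\<lambda>A. P ** A ** matrix_inv P) ` Agrp"
    using assms(5) by blast
  have inv: "invertible P" by (rule invertible_SOo12[OF P])
  define H where "H = Ad (matrix_inv P, 0) ` G"
  interpret boost_group H unfolding H_def by (rule boost_group_Ad_conj[OF assms(1-3) inv L])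
  have G: "G = Ad (P, 0) ` H"
    using Ad_linear_elem_inverse[OF invertible_matrix_inv[OF inv]]
    by (simp add: H_def image_image matrix_inv_matrix_inv[OF inv])
  obtain w where w: "(B1, w) \<in> lie_alg H" using exists_lie_alg_B1 by blast
  obtain a b c where "lie_translations = B1_eigenspan a b c"
    using B1_invariant_subspace_eq[OF subspace_lie_translations B1_mult_lie_translations] by blast
  then have alg: "lie_alg H = boost_alg w (B1_eigenspan a b c)"
    using lie_alg_eq_boost_alg[OF w] by simp
  have "cohomogeneity_one H"
    by (rule cohomogeneity_one_Ad_linear_elem_imageD[OF inv]) (use assms(4) G in simp)
  then obtain y where "dim (orbit_tangent H y) = 2" unfolding cohomogeneity_one_def by blast
  then have "dim {fst \<xi> *v y + snd \<xi> | \<xi>. \<xi> \<in> boost_alg w (B1_eigenspan a b c)} = 2"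
    by (simp add: orbit_tangent_def alg)
  note dims = boost_alg_orbit_dim_2[OF this]
  have "lie_alg G = Ad (P, 0) ` boost_alg w (B1_eigenspan a b c)"
    using lie_alg_Ad_linear_elem_image[OF inv, of H] G alg by simp
  then show ?thesis by (rule conj_alg_normal_forms[OF P _ dims])
qed

end
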